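(* Let $\mathcal{F},\mathcal{G}:(\mathcal{K},c)\to\mathcal{K}'$ be bilax functors and $b:A\to A$ a $c$-bimonad in $\mathcal{K}$ with structure $(\mu,\eta,\Delta,\varepsilon)$. (i) If $\phi:\mathcal{F}\Rightarrow\mathcal{G}$ is a colax natural transformation of colax functors, then $\lambda:=(\mathcal{G}(\eta)\circ1_{\phi_A})\cdot\phi_{\mathrm{id}_A}\cdot(1_{\phi_A}\circ\mathcal{F}^0_A):\phi_A\Rightarrow\mathcal{G}(b)\circ\phi_A$ makes $\phi_A$ a left comodule over the comonad $\mathcal{G}(b)$ with comultiplication $\mathcal{G}_{2;b,b}\cdot\mathcal{G}(\Delta)$ and counit $\mathcal{G}_{0;A}\cdot\mathcal{G}(\varepsilon)$. (ii) Dually, if $\psi:\mathcal{F}\Rightarrow\mathcal{G}$ is a lax natural transformation of lax functors, then $\rhd:=(1_{\psi_A}\circ\mathcal{F}_{0;A})\cdot\psi_{\mathrm{id}_A}\cdot(\mathcal{G}(\varepsilon)\circ1_{\psi_A}):\mathcal{G}(b)\circ\psi_A\Rightarrow\psi_A$ makes $\psi_A$ a left module over the monad $\mathcal{G}(b)$ with multiplication $\mathcal{G}(\mu)\cdot\mathcal{G}^2_{b,b}$ and unit $\mathcal{G}(\eta)\cdot\mathcal{G}^0_A$.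
   Context: Conventions: $\circ$ horizontal composition, $\cdot$ vertical composition ($\beta\cdot\alpha$: first $\alpha$), $1$ identity 2-cells. A bilax functor $(\mathcal{F},\nu):(\mathcal{K},c)\to\mathcal{K}'$ (where $c$ is a Yang–Baxter operator of $\mathcal{K}$, i.e. natural 2-cells $c_{g,f}:g\circ f\Rightarrow f\circ g$ for 1-endocells satisfying the Yang–Baxter equation and $c_{\mathrm{id},f}=c_{f,\mathrm{id}}=1$) is simultaneously a lax functor (structure $\mathcal{F}^2_{g,f}:\mathcal{F}(g)\circ\mathcal{F}(f)\Rightarrow\mathcal{F}(gf)$, $\mathcal{F}^0_A:\mathrm{id}\Rightarrow\mathcal{F}(\mathrm{id}_A)$) and a colax functor (structure $\mathcal{F}_{2;g,f}:\mathcal{F}(gf)\Rightarrow\mathcal{F}(g)\circ\mathcal{F}(f)$, $\mathcal{F}_{0;A}:\mathcal{F}(\mathrm{id}_A)\Rightarrow\mathrm{id}$) with a Yang–Baxter operator $\nu$ satisfying the distributive-law and bilaxity axioms; in particular $\mathcal{F}^0_A\circ\mathcal{F}^0_A=\mathcal{F}_{2;\mathrm{id},\mathrm{id}}\cdot\mathcal{F}^0_A$, $\mathcal{F}_{0;A}\circ\mathcal{F}_{0;A}=\mathcal{F}_{0;A}\cdot\mathcal{F}^2_{\mathrm{id},\mathrm{id}}$, $\mathcal{F}_{0;A}\cdot\mathcal{F}^0_A=1$. A $c$-bimonad $b$ is a 1-endocell with monad $(\mu,\eta)$ and comonad $(\Delta,\varepsilon)$ such that $c_{b,b}$ is a left and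 right distributive law for both, $(\mu\circ\mu)\cdot(1\circ c_{b,b}\circ1)\cdot(\Delta\circ\Delta)=\Delta\cdot\mu$, $\varepsilon\circ\varepsilon=\varepsilon\cdot\mu$, $\eta\circ\eta=\Delta\cdot\eta$, $\varepsilon\cdot\eta=1$. A colax natural transformation $\phi:\mathcal{F}\Rightarrow\mathcal{G}$ of colax functors: 1-cells $\phi_A:\mathcal{F}(A)\to\mathcal{G}(A)$ and 2-cells $\phi_f:\phi_B\circ\mathcal{F}(f)\Rightarrow\mathcal{G}(f)\circ\phi_A$ natural in $f$ with $(\mathcal{G}_{2;g,f}\circ1)\cdot\phi_{gf}=(1\circ\phi_f)\cdot(\phi_g\circ1)\cdot(1\circ\mathcal{F}_{2;g,f})$ and $(\mathcal{G}_{0;A}\circ1)\cdot\phi_{\mathrm{id}_A}=1\circ\mathcal{F}_{0;A}$. A lax natural transformation $\psi:\mathcal{F}\Rightarrow\mathcal{G}$ of lax functors: 2-cells $\psi_f:\mathcal{G}(f)\circ\psi_A\Rightarrow\psi_B\circ\mathcal{F}(f)$ natural with $\psi_{gf}\cdot(\mathcal{G}^2_{g,f}\circ1)=(1\circ\mathcal{F}^2_{g,f})\cdot(\psi_g\circ1)\cdot(1\circ\psi_f)$ and $\psi_{\mathrm{id}_A}\cdot(\mathcal{G}^0_A\circ1)=1\circ\mathcal{F}^0_A$. A left comodule over a comonad $(d,\Delta_d,\varepsilon_d)$ on $A$ is a 1-cell $x$ into $A$ with $\lambda:x\Rightarrow d\circ x$ such that $(\Delta_d\circ1)\cdot\lambda=(1\circ\lambda)\cdot\lambda$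 and $(\varepsilon_d\circ1)\cdot\lambda=1$; left modules over monads are defined dually. *)

theory Defs
  imports Main
begin

text \<open>A strict 2-category with object carrier Ob, 1-cell carrier Ar, 2-cell carrier Ce.
  cmp K g f is the horizontal composite g o f (f first), vc K b a is the vertical
  composite b . a (a first), hc K b a is the horizontal composite of 2-cells.\<close>

record ('o,'a,'c) cat2 =
  Ob :: "'o set"
  Ar :: "'a set"
  Ce :: "'c set"
  src :: "'a \<Rightarrow> 'o"
  trg :: "'a \<Rightarrow> 'o"
  idn :: "'o \<Rightarrow> 'a"
  cmp :: "'a \<Rightarrow> 'a \<Rightarrow> 'a"
  dom2 :: "'c \<Rightarrow> 'a"
  cod2 :: "'c \<Rightarrow> 'a"
  vc :: "'c \<Rightarrow> 'c \<Rightarrow> 'c"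
  hc :: "'c \<Rightarrow> 'c \<Rightarrow> 'c"
  id2 :: "'a \<Rightarrow> 'c"

definition hom1 :: "('o,'a,'c) cat2 \<Rightarrow> 'o \<Rightarrow> 'o \<Rightarrow> 'a set" where
  "hom1 K A B = {f \<in> Ar K. src K f = A \<and> trg K f = B}"

definition hom2 :: "('o,'a,'c) cat2 \<Rightarrow> 'a \<Rightarrow> 'a \<Rightarrow> 'c set" where
  "hom2 K f g = {\<alpha> \<in> Ce K. dom2 K \<alpha> = f \<and> cod2 K \<alpha> = g}"

definition endo :: "('o,'a,'c) cat2 \<Rightarrow> 'o \<Rightarrow> 'a \<Rightarrow> bool" where
  "endo K A f \<longleftrightarrow> f \<in> hom1 K A A"

definition strict_2cat :: "('o,'a,'c) cat2 \<Rightarrow> bool" where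
  "strict_2cat K \<longleftrightarrow>
    (\<forall>f \<in> Ar K. src K f \<in> Ob K \<and> trg K f \<in> Ob K) \<and>
    (\<forall>A \<in> Ob K. idn K A \<in> hom1 K A A) \<and>
    (\<forall>A B C f g. f \<in> hom1 K A B \<longrightarrow> g \<in> hom1 K B C \<longrightarrow> cmp K g f \<in> hom1 K A C) \<and>
    (\<forall>A B C D f g h. f \<in> hom1 K A B \<longrightarrow> g \<in> hom1 K B C \<longrightarrow> h \<in> hom1 K C D \<longrightarrow>
        cmp K h (cmp K g f) = cmp K (cmp K h g) f) \<and>
    (\<forall>A B f. f \<in> hom1 K A B \<longrightarrow> cmp K (idn K B) f = f \<and> cmp K f (idn K A) = f) \<and>
    (\<forall>\<alpha> \<in> Ce K. \<exists>A B. dom2 K \<alpha> \<in> hom1 K A B \<and> cod2 K \<alpha> \<in> hom1 K A B) \<and>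
    (\<forall>f \<in> Ar K. id2 K f \<in> hom2 K f f) \<and>
    (\<forall>f g h \<alpha> \<beta>. \<alpha> \<in> hom2 K f g \<longrightarrow> \<beta> \<in> hom2 K g h \<longrightarrow> vc K \<beta> \<alpha> \<in> hom2 K f h) \<and>
    (\<forall>f g h k \<alpha> \<beta> \<gamma>. \<alpha> \<in> hom2 K f g \<longrightarrow> \<beta> \<in> hom2 K g h \<longrightarrow> \<gamma> \<in> hom2 K h k \<longrightarrow>
        vc K \<gamma> (vc K \<beta> \<alpha>) = vc K (vc K \<gamma> \<beta>) \<alpha>) \<and>
    (\<forall>f g \<alpha>. \<alpha> \<in> hom2 K f g \<longrightarrow> vc K (id2 K g) \<alpha> = \<alpha> \<and> vc K \<alpha> (id2 K f) = \<alpha>) \<and>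
    (\<forall>A B C f f' g g' \<alpha> \<beta>. f \<in> hom1 K A B \<longrightarrow> f' \<in> hom1 K A B \<longrightarrow>
        g \<in> hom1 K B C \<longrightarrow> g' \<in> hom1 K B C \<longrightarrow> \<alpha> \<in> hom2 K f f' \<longrightarrow> \<beta> \<in> hom2 K g g' \<longrightarrow>
        hc K \<beta> \<alpha> \<in> hom2 K (cmp K g f) (cmp K g' f')) \<and>
    (\<forall>A B C D f f' g g' h h' \<alpha> \<beta> \<gamma>. f \<in> hom1 K A B \<longrightarrow> f' \<in> hom1 K A B \<longrightarrow>
        g \<in> hom1 K B C \<longrightarrow> g' \<in> hom1 K B C \<longrightarrow> h \<in> hom1 K C D \<longrightarrow> h' \<in> hom1 K C D \<longrightarrow>
        \<alpha> \<in> hom2 K f f' \<longrightarrow> \<beta> \<in> hom2 K g g' \<longrightarrow> \<gamma> \<in> hom2 K h h' \<longrightarrow>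
        hc K \<gamma> (hc K \<beta> \<alpha>) = hc K (hc K \<gamma> \<beta>) \<alpha>) \<and>
    (\<forall>A B f f' \<alpha>. f \<in> hom1 K A B \<longrightarrow> f' \<in> hom1 K A B \<longrightarrow> \<alpha> \<in> hom2 K f f' \<longrightarrow>
        hc K (id2 K (idn K B)) \<alpha> = \<alpha> \<and> hc K \<alpha> (id2 K (idn K A)) = \<alpha>) \<and>
    (\<forall>A B C f g. f \<in> hom1 K A B \<longrightarrow> g \<in> hom1 K B C \<longrightarrow>
        hc K (id2 K g) (id2 K f) = id2 K (cmp K g f)) \<and>
    (\<forall>A B C f f' f'' g g' g'' \<alpha> \<alpha>' \<beta> \<beta>'.
        f \<in> hom1 K A B \<longrightarrow> f' \<in> hom1 K A B \<longrightarrow> f'' \<in> hom1 K A B \<longrightarrow>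
        g \<in> hom1 K B C \<longrightarrow> g' \<in> hom1 K B C \<longrightarrow> g'' \<in> hom1 K B C \<longrightarrow>
        \<alpha> \<in> hom2 K f f' \<longrightarrow> \<alpha>' \<in> hom2 K f' f'' \<longrightarrow> \<beta> \<in> hom2 K g g' \<longrightarrow> \<beta>' \<in> hom2 K g' g'' \<longrightarrow>
        hc K (vc K \<beta>' \<beta>) (vc K \<alpha>' \<alpha>) = vc K (hc K \<beta>' \<alpha>') (hc K \<beta> \<alpha>))"

definition yb_operator :: "('o,'a,'c) cat2 \<Rightarrow> ('a \<Rightarrow> 'a \<Rightarrow> 'c) \<Rightarrow> bool" where
  "yb_operator K c \<longleftrightarrow>
    (\<forall>A \<in> Ob K. \<forall>f g. endo K A f \<longrightarrow> endo K A g \<longrightarrow>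
        c g f \<in> hom2 K (cmp K g f) (cmp K f g)) \<and>
    (\<forall>A \<in> Ob K. \<forall>f f' g g' \<alpha> \<beta>. endo K A f \<longrightarrow> endo K A f' \<longrightarrow> endo K A g \<longrightarrow> endo K A g' \<longrightarrow>
        \<alpha> \<in> hom2 K f f' \<longrightarrow> \<beta> \<in> hom2 K g g' \<longrightarrow>
        vc K (c g' f') (hc K \<beta> \<alpha>) = vc K (hc K \<alpha> \<beta>) (c g f)) \<and>
    (\<forall>A \<in> Ob K. \<forall>f g h. endo K A f \<longrightarrow> endo K A g \<longrightarrow> endo K A h \<longrightarrow>
        vc K (hc K (id2 K f) (c h g)) (vc K (hc K (c h f) (id2 K g)) (hc K (id2 K h) (c g f)))
      = vc K (hc K (c g f) (id2 K h)) (vc K (hc K (id2 K g) (c h f)) (hc K (c h g) (id2 K f)))) \<and>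
    (\<forall>A \<in> Ob K. \<forall>f. endo K A f \<longrightarrow> c (idn K A) f = id2 K f \<and> c f (idn K A) = id2 K f)"

definition monad2 :: "('o,'a,'c) cat2 \<Rightarrow> 'o \<Rightarrow> 'a \<Rightarrow> 'c \<Rightarrow> 'c \<Rightarrow> bool" where
  "monad2 K A b \<mu> \<eta> \<longleftrightarrow> A \<in> Ob K \<and> endo K A b \<and>
    \<mu> \<in> hom2 K (cmp K b b) b \<and> \<eta> \<in> hom2 K (idn K A) b \<and>
    vc K \<mu> (hc K \<mu> (id2 K b)) = vc K \<mu> (hc K (id2 K b) \<mu>) \<and>
    vc K \<mu> (hc K \<eta> (id2 K b)) = id2 K b \<and> vc K \<mu> (hc K (id2 K b) \<eta>) = id2 K b"

definition comonad2 :: "('o,'a,'c) cat2 \<Rightarrow> 'o \<Rightarrow> 'a \<Rightarrow> 'c \<Rightarrow> 'c \<Rightarrow> bool" where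
  "comonad2 K A b \<Delta> \<epsilon> \<longleftrightarrow> A \<in> Ob K \<and> endo K A b \<and>
    \<Delta> \<in> hom2 K b (cmp K b b) \<and> \<epsilon> \<in> hom2 K b (idn K A) \<and>
    vc K (hc K \<Delta> (id2 K b)) \<Delta> = vc K (hc K (id2 K b) \<Delta>) \<Delta> \<and>
    vc K (hc K \<epsilon> (id2 K b)) \<Delta> = id2 K b \<and> vc K (hc K (id2 K b) \<epsilon>) \<Delta> = id2 K b"

text \<open>c_{b,b} as a left and right distributive law for the monad and for the comonad b
  (the equations a braiding would give).\<close>
definition c_bimonad :: "('o,'a,'c) cat2 \<Rightarrow> ('a \<Rightarrow> 'a \<Rightarrow> 'c) \<Rightarrow> 'o \<Rightarrow> 'a \<Rightarrow>
    'c \<Rightarrow> 'c \<Rightarrow> 'c \<Rightarrow> 'c \<Rightarrow> bool" where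
  "c_bimonad K c A b \<mu> \<eta> \<Delta> \<epsilon> \<longleftrightarrow>
    monad2 K A b \<mu> \<eta> \<and> comonad2 K A b \<Delta> \<epsilon> \<and>
    (let i = id2 K b; cb = c b b in
      vc K cb (hc K \<mu> i) = vc K (hc K i \<mu>) (vc K (hc K cb i) (hc K i cb)) \<and>
      vc K cb (hc K \<eta> i) = hc K i \<eta> \<and>
      vc K cb (hc K i \<mu>) = vc K (hc K \<mu> i) (vc K (hc K i cb) (hc K cb i)) \<and>
      vc K cb (hc K i \<eta>) = hc K \<eta> i \<and>
      vc K (hc K \<Delta> i) cb = vc K (hc K i cb) (vc K (hc K cb i) (hc K i \<Delta>)) \<and>
      vc K (hc K \<epsilon> i) cb = hc K i \<epsilon> \<and>
      vc K (hc K i \<Delta>) cb = vc K (hc K cb i) (vc K (hc K i cb) (hc K \<Delta> i)) \<and>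
      vc K (hc K i \<epsilon>) cb = hc K \<epsilon> i \<and>
      vc K (hc K \<mu> \<mu>) (vc K (hc K i (hc K cb i)) (hc K \<Delta> \<Delta>)) = vc K \<Delta> \<mu> \<and>
      hc K \<epsilon> \<epsilon> = vc K \<epsilon> \<mu> \<and>
      hc K \<eta> \<eta> = vc K \<Delta> \<eta> \<and>
      vc K \<epsilon> \<eta> = id2 K (idn K A))"

definition pre_functor :: "('o,'a,'c) cat2 \<Rightarrow> ('p,'b,'d) cat2 \<Rightarrow>
    ('o \<Rightarrow> 'p) \<Rightarrow> ('a \<Rightarrow> 'b) \<Rightarrow> ('c \<Rightarrow> 'd) \<Rightarrow> bool" where
  "pre_functor K K' Fo F1 F2 \<longleftrightarrow>
    (\<forall>A \<in> Ob K. Fo A \<in> Ob K') \<and>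
    (\<forall>A B f. f \<in> hom1 K A B \<longrightarrow> F1 f \<in> hom1 K' (Fo A) (Fo B)) \<and>
    (\<forall>f g \<alpha>. \<alpha> \<in> hom2 K f g \<longrightarrow> F2 \<alpha> \<in> hom2 K' (F1 f) (F1 g)) \<and>
    (\<forall>f g h \<alpha> \<beta>. \<alpha> \<in> hom2 K f g \<longrightarrow> \<beta> \<in> hom2 K g h \<longrightarrow> F2 (vc K \<beta> \<alpha>) = vc K' (F2 \<beta>) (F2 \<alpha>)) \<and>
    (\<forall>f \<in> Ar K. F2 (id2 K f) = id2 K' (F1 f))"

text \<open>Lax functor: L2 g f = F^2_{g,f} : F g o F f => F(g f), L0 A = F^0_A : id => F(id_A).\<close>
definition lax_functor :: "('o,'a,'c) cat2 \<Rightarrow> ('p,'b,'d) cat2 \<Rightarrow>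
    ('o \<Rightarrow> 'p) \<Rightarrow> ('a \<Rightarrow> 'b) \<Rightarrow> ('c \<Rightarrow> 'd) \<Rightarrow> ('a \<Rightarrow> 'a \<Rightarrow> 'd) \<Rightarrow> ('o \<Rightarrow> 'd) \<Rightarrow> bool" where
  "lax_functor K K' Fo F1 F2 L2 L0 \<longleftrightarrow> pre_functor K K' Fo F1 F2 \<and>
    (\<forall>A B C f g. f \<in> hom1 K A B \<longrightarrow> g \<in> hom1 K B C \<longrightarrow>
        L2 g f \<in> hom2 K' (cmp K' (F1 g) (F1 f)) (F1 (cmp K g f))) \<and>
    (\<forall>A \<in> Ob K. L0 A \<in> hom2 K' (idn K' (Fo A)) (F1 (idn K A))) \<and>
    (\<forall>A B C f f' g g' \<alpha> \<beta>. f \<in> hom1 K A B \<longrightarrow> f' \<in> hom1 K A B \<longrightarrow>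
        g \<in> hom1 K B C \<longrightarrow> g' \<in> hom1 K B C \<longrightarrow> \<alpha> \<in> hom2 K f f' \<longrightarrow> \<beta> \<in> hom2 K g g' \<longrightarrow>
        vc K' (L2 g' f') (hc K' (F2 \<beta>) (F2 \<alpha>)) = vc K' (F2 (hc K \<beta> \<alpha>)) (L2 g f)) \<and>
    (\<forall>A B C D f g h. f \<in> hom1 K A B \<longrightarrow> g \<in> hom1 K B C \<longrightarrow> h \<in> hom1 K C D \<longrightarrow>
        vc K' (L2 h (cmp K g f)) (hc K' (id2 K' (F1 h)) (L2 g f))
      = vc K' (L2 (cmp K h g) f) (hc K' (L2 h g) (id2 K' (F1 f)))) \<and>
    (\<forall>A B f. f \<in> hom1 K A B \<longrightarrow>
        vc K' (L2 (idn K B) f) (hc K' (L0 B) (id2 K' (F1 f))) = id2 K' (F1 f) \<and>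
        vc K' (L2 f (idn K A)) (hc K' (id2 K' (F1 f)) (L0 A)) = id2 K' (F1 f))"

text \<open>Colax functor: C2 g f = F_{2;g,f} : F(g f) => F g o F f, C0 A = F_{0;A} : F(id_A) => id.\<close>
definition colax_functor :: "('o,'a,'c) cat2 \<Rightarrow> ('p,'b,'d) cat2 \<Rightarrow>
    ('o \<Rightarrow> 'p) \<Rightarrow> ('a \<Rightarrow> 'b) \<Rightarrow> ('c \<Rightarrow> 'd) \<Rightarrow> ('a \<Rightarrow> 'a \<Rightarrow> 'd) \<Rightarrow> ('o \<Rightarrow> 'd) \<Rightarrow> bool" where
  "colax_functor K K' Fo F1 F2 C2 C0 \<longleftrightarrow> pre_functor K K' Fo F1 F2 \<and>
    (\<forall>A B C f g. f \<in> hom1 K A B \<longrightarrow> g \<in> hom1 K B C \<longrightarrow>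
        C2 g f \<in> hom2 K' (F1 (cmp K g f)) (cmp K' (F1 g) (F1 f))) \<and>
    (\<forall>A \<in> Ob K. C0 A \<in> hom2 K' (F1 (idn K A)) (idn K' (Fo A))) \<and>
    (\<forall>A B C f f' g g' \<alpha> \<beta>. f \<in> hom1 K A B \<longrightarrow> f' \<in> hom1 K A B \<longrightarrow>
        g \<in> hom1 K B C \<longrightarrow> g' \<in> hom1 K B C \<longrightarrow> \<alpha> \<in> hom2 K f f' \<longrightarrow> \<beta> \<in> hom2 K g g' \<longrightarrow>
        vc K' (hc K' (F2 \<beta>) (F2 \<alpha>)) (C2 g f) = vc K' (C2 g' f') (F2 (hc K \<beta> \<alpha>))) \<and>
    (\<forall>A B C D f g h. f \<in> hom1 K A B \<longrightarrow> g \<in> hom1 K B C \<longrightarrow> h \<in> hom1 K C D \<longrightarrow>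
        vc K' (hc K' (id2 K' (F1 h)) (C2 g f)) (C2 h (cmp K g f))
      = vc K' (hc K' (C2 h g) (id2 K' (F1 f))) (C2 (cmp K h g) f)) \<and>
    (\<forall>A B f. f \<in> hom1 K A B \<longrightarrow>
        vc K' (hc K' (C0 B) (id2 K' (F1 f))) (C2 (idn K B) f) = id2 K' (F1 f) \<and>
        vc K' (hc K' (id2 K' (F1 f)) (C0 A)) (C2 f (idn K A)) = id2 K' (F1 f))"

text \<open>Bilax functor (F, nu) : (K, c) -> K'.  Only the part of the distributive-law and
  bilaxity axioms recorded in the context is imposed.\<close>
definition bilax_functor :: "('o,'a,'c) cat2 \<Rightarrow> ('a \<Rightarrow> 'a \<Rightarrow> 'c) \<Rightarrow> ('p,'b,'d) cat2 \<Rightarrow>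
    ('o \<Rightarrow> 'p) \<Rightarrow> ('a \<Rightarrow> 'b) \<Rightarrow> ('c \<Rightarrow> 'd) \<Rightarrow> ('a \<Rightarrow> 'a \<Rightarrow> 'd) \<Rightarrow> ('o \<Rightarrow> 'd) \<Rightarrow>
    ('a \<Rightarrow> 'a \<Rightarrow> 'd) \<Rightarrow> ('o \<Rightarrow> 'd) \<Rightarrow> ('a \<Rightarrow> 'a \<Rightarrow> 'd) \<Rightarrow> bool" where
  "bilax_functor K c K' Fo F1 F2 L2 L0 C2 C0 \<nu> \<longleftrightarrow>
    lax_functor K K' Fo F1 F2 L2 L0 \<and> colax_functor K K' Fo F1 F2 C2 C0 \<and>
    (\<forall>A \<in> Ob K. \<forall>f g. endo K A f \<longrightarrow> endo K A g \<longrightarrow>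
        \<nu> g f \<in> hom2 K' (cmp K' (F1 g) (F1 f)) (cmp K' (F1 f) (F1 g))) \<and>
    (\<forall>A \<in> Ob K. \<forall>f f' g g' \<alpha> \<beta>. endo K A f \<longrightarrow> endo K A f' \<longrightarrow> endo K A g \<longrightarrow> endo K A g' \<longrightarrow>
        \<alpha> \<in> hom2 K f f' \<longrightarrow> \<beta> \<in> hom2 K g g' \<longrightarrow>
        vc K' (\<nu> g' f') (hc K' (F2 \<beta>) (F2 \<alpha>)) = vc K' (hc K' (F2 \<alpha>) (F2 \<beta>)) (\<nu> g f)) \<and>
    (\<forall>A \<in> Ob K. \<forall>f g h. endo K A f \<longrightarrow> endo K A g \<longrightarrow> endo K A h \<longrightarrow>
        vc K' (hc K' (id2 K' (F1 f)) (\<nu> h g))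
          (vc K' (hc K' (\<nu> h f) (id2 K' (F1 g))) (hc K' (id2 K' (F1 h)) (\<nu> g f)))
      = vc K' (hc K' (\<nu> g f) (id2 K' (F1 h)))
          (vc K' (hc K' (id2 K' (F1 g)) (\<nu> h f)) (hc K' (\<nu> h g) (id2 K' (F1 f))))) \<and>
    (\<forall>A \<in> Ob K.
        hc K' (L0 A) (L0 A) = vc K' (C2 (idn K A) (idn K A)) (L0 A) \<and>
        hc K' (C0 A) (C0 A) = vc K' (C0 A) (L2 (idn K A) (idn K A)) \<and>
        vc K' (C0 A) (L0 A) = id2 K' (idn K' (Fo A)))"

definition colax_nat :: "('o,'a,'c) cat2 \<Rightarrow> ('p,'b,'d) cat2 \<Rightarrow>
    ('o \<Rightarrow> 'p) \<Rightarrow> ('a \<Rightarrow> 'b) \<Rightarrow> ('c \<Rightarrow> 'd) \<Rightarrow> ('a \<Rightarrow> 'a \<Rightarrow> 'd) \<Rightarrow> ('o \<Rightarrow> 'd) \<Rightarrow>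
    ('o \<Rightarrow> 'p) \<Rightarrow> ('a \<Rightarrow> 'b) \<Rightarrow> ('c \<Rightarrow> 'd) \<Rightarrow> ('a \<Rightarrow> 'a \<Rightarrow> 'd) \<Rightarrow> ('o \<Rightarrow> 'd) \<Rightarrow>
    ('o \<Rightarrow> 'b) \<Rightarrow> ('a \<Rightarrow> 'd) \<Rightarrow> bool" where
  "colax_nat K K' Fo F1 F2 FC2 FC0 Go G1 G2 GC2 GC0 \<phi>0 \<phi>1 \<longleftrightarrow>
    colax_functor K K' Fo F1 F2 FC2 FC0 \<and> colax_functor K K' Go G1 G2 GC2 GC0 \<and>
    (\<forall>A \<in> Ob K. \<phi>0 A \<in> hom1 K' (Fo A) (Go A)) \<and>
    (\<forall>A B f. f \<in> hom1 K A B \<longrightarrow>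
        \<phi>1 f \<in> hom2 K' (cmp K' (\<phi>0 B) (F1 f)) (cmp K' (G1 f) (\<phi>0 A))) \<and>
    (\<forall>A B f f' \<alpha>. f \<in> hom1 K A B \<longrightarrow> f' \<in> hom1 K A B \<longrightarrow> \<alpha> \<in> hom2 K f f' \<longrightarrow>
        vc K' (hc K' (G2 \<alpha>) (id2 K' (\<phi>0 A))) (\<phi>1 f) = vc K' (\<phi>1 f') (hc K' (id2 K' (\<phi>0 B)) (F2 \<alpha>))) \<and>
    (\<forall>A B C f g. f \<in> hom1 K A B \<longrightarrow> g \<in> hom1 K B C \<longrightarrow>
        vc K' (hc K' (GC2 g f) (id2 K' (\<phi>0 A))) (\<phi>1 (cmp K g f))
      = vc K' (hc K' (id2 K' (G1 g)) (\<phi>1 f))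
          (vc K' (hc K' (\<phi>1 g) (id2 K' (F1 f))) (hc K' (id2 K' (\<phi>0 C)) (FC2 g f)))) \<and>
    (\<forall>A \<in> Ob K. vc K' (hc K' (GC0 A) (id2 K' (\<phi>0 A))) (\<phi>1 (idn K A))
        = hc K' (id2 K' (\<phi>0 A)) (FC0 A))"

definition lax_nat :: "('o,'a,'c) cat2 \<Rightarrow> ('p,'b,'d) cat2 \<Rightarrow>
    ('o \<Rightarrow> 'p) \<Rightarrow> ('a \<Rightarrow> 'b) \<Rightarrow> ('c \<Rightarrow> 'd) \<Rightarrow> ('a \<Rightarrow> 'a \<Rightarrow> 'd) \<Rightarrow> ('o \<Rightarrow> 'd) \<Rightarrow>
    ('o \<Rightarrow> 'p) \<Rightarrow> ('a \<Rightarrow> 'b) \<Rightarrow> ('c \<Rightarrow> 'd) \<Rightarrow> ('a \<Rightarrow> 'a \<Rightarrow> 'd) \<Rightarrow> ('o \<Rightarrow> 'd) \<Rightarrow>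
    ('o \<Rightarrow> 'b) \<Rightarrow> ('a \<Rightarrow> 'd) \<Rightarrow> bool" where
  "lax_nat K K' Fo F1 F2 FL2 FL0 Go G1 G2 GL2 GL0 \<psi>0 \<psi>1 \<longleftrightarrow>
    lax_functor K K' Fo F1 F2 FL2 FL0 \<and> lax_functor K K' Go G1 G2 GL2 GL0 \<and>
    (\<forall>A \<in> Ob K. \<psi>0 A \<in> hom1 K' (Fo A) (Go A)) \<and>
    (\<forall>A B f. f \<in> hom1 K A B \<longrightarrow>
        \<psi>1 f \<in> hom2 K' (cmp K' (G1 f) (\<psi>0 A)) (cmp K' (\<psi>0 B) (F1 f))) \<and>
    (\<forall>A B f f' \<alpha>. f \<in> hom1 K A B \<longrightarrow> f' \<in> hom1 K A B \<longrightarrow> \<alpha> \<in> hom2 K f f' \<longrightarrow>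
        vc K' (hc K' (id2 K' (\<psi>0 B)) (F2 \<alpha>)) (\<psi>1 f) = vc K' (\<psi>1 f') (hc K' (G2 \<alpha>) (id2 K' (\<psi>0 A)))) \<and>
    (\<forall>A B C f g. f \<in> hom1 K A B \<longrightarrow> g \<in> hom1 K B C \<longrightarrow>
        vc K' (\<psi>1 (cmp K g f)) (hc K' (GL2 g f) (id2 K' (\<psi>0 A)))
      = vc K' (hc K' (id2 K' (\<psi>0 C)) (FL2 g f))
          (vc K' (hc K' (\<psi>1 g) (id2 K' (F1 f))) (hc K' (id2 K' (G1 g)) (\<psi>1 f)))) \<and>
    (\<forall>A \<in> Ob K. vc K' (\<psi>1 (idn K A)) (hc K' (GL0 A) (id2 K' (\<psi>0 A)))
        = hc K' (id2 K' (\<psi>0 A)) (FL0 A))"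

definition left_comodule :: "('o,'a,'c) cat2 \<Rightarrow> 'o \<Rightarrow> 'a \<Rightarrow> 'c \<Rightarrow> 'c \<Rightarrow> 'a \<Rightarrow> 'c \<Rightarrow> bool" where
  "left_comodule K A d \<Delta> \<epsilon> x co \<longleftrightarrow> x \<in> Ar K \<and> trg K x = A \<and>
    co \<in> hom2 K x (cmp K d x) \<and>
    vc K (hc K \<Delta> (id2 K x)) co = vc K (hc K (id2 K d) co) co \<and>
    vc K (hc K \<epsilon> (id2 K x)) co = id2 K x"

definition left_module :: "('o,'a,'c) cat2 \<Rightarrow> 'o \<Rightarrow> 'a \<Rightarrow> 'c \<Rightarrow> 'c \<Rightarrow> 'a \<Rightarrow> 'c \<Rightarrow> bool" where
  "left_module K A d \<mu> \<eta> x \<rho> \<longleftrightarrow> x \<in> Ar K \<and> trg K x = A \<and>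
    \<rho> \<in> hom2 K (cmp K d x) x \<and>
    vc K \<rho> (hc K \<mu> (id2 K x)) = vc K \<rho> (hc K (id2 K d) \<rho>) \<and>
    vc K \<rho> (hc K \<eta> (id2 K x)) = id2 K x"

end

theory Submission
  imports Defs
begin

text \<open>
  The unit \<open>\<eta> : id \<Rightarrow> b\<close>, moved along \<open>\<F>\<^sup>0\<close> and \<open>\<phi>\<^bsub>id\<^esub>\<close>, becomes
  \<open>\<lambda> : \<phi>\<^sub>A \<Rightarrow> \<G>(b) \<phi>\<^sub>A\<close>. A colax functor maps comonads to comonads, so \<open>\<G>(b)\<close> is a
  comonad, and \<open>\<lambda>\<close> is a coaction: counitality comes from \<open>\<epsilon> \<eta> = 1\<close>,
  \<open>\<F>\<^sub>0 \<F>\<^sup>0 = 1\<close> and the unit axiom of \<open>\<phi>\<close>; coassociativity from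
  \<open>\<Delta> \<eta> = \<eta> \<circ> \<eta>\<close>, \<open>\<F>\<^sup>0 \<circ> \<F>\<^sup>0 = \<F>\<^sub>2 \<F>\<^sup>0\<close>, naturality of \<open>\<G>\<^sub>2\<close> and the
  composition axiom of \<open>\<phi>\<close>, the two sides being matched by the interchange law.
  Part (ii) is part (i) in \<open>\<K>\<^sup>c\<^sup>o\<close>, where 2-cells are reversed: lax functors and lax
  transformations become colax ones, the monad \<open>b\<close> becomes a comonad and modules
  become comodules.
\<close>

section \<open>Strict 2-categories\<close>

locale strict_2category =
  fixes K :: "('o,'a,'c) cat2"
  assumes Ar_src_trg: "f \<in> Ar K \<Longrightarrow> src K f \<in> Ob K \<and> trg K f \<in> Ob K"
    and idn_hom1: "A \<in> Ob K \<Longrightarrow> idn K A \<in> hom1 K A A"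
    and cmp_hom1: "\<And>A B C f g. f \<in> hom1 K A B \<Longrightarrow> g \<in> hom1 K B C \<Longrightarrow> cmp K g f \<in> hom1 K A C"
    and cmp_assoc_hom1: "\<And>A B C D f g h.
      f \<in> hom1 K A B \<Longrightarrow> g \<in> hom1 K B C \<Longrightarrow> h \<in> hom1 K C D \<Longrightarrow> cmp K h (cmp K g f) = cmp K (cmp K h g) f"
    and cmp_idn_hom1: "\<And>A B f. f \<in> hom1 K A B \<Longrightarrow> cmp K (idn K B) f = f \<and> cmp K f (idn K A) = f"
    and Ce_parallel: "\<alpha> \<in> Ce K \<Longrightarrow> \<exists>A B. dom2 K \<alpha> \<in> hom1 K A B \<and> cod2 K \<alpha> \<in> hom1 K A B"
    and id2_hom2: "f \<in> Ar K \<Longrightarrow> id2 K f \<in> hom2 K f f"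
    and vc_hom2: "\<And>f g h \<alpha> \<beta>. \<alpha> \<in> hom2 K f g \<Longrightarrow> \<beta> \<in> hom2 K g h \<Longrightarrow> vc K \<beta> \<alpha> \<in> hom2 K f h"
    and vc_assoc_hom2: "\<And>f g h k \<alpha> \<beta> \<gamma>.
      \<alpha> \<in> hom2 K f g \<Longrightarrow> \<beta> \<in> hom2 K g h \<Longrightarrow> \<gamma> \<in> hom2 K h k \<Longrightarrow> vc K \<gamma> (vc K \<beta> \<alpha>) = vc K (vc K \<gamma> \<beta>) \<alpha>"
    and vc_id2_hom2: "\<And>f g \<alpha>. \<alpha> \<in> hom2 K f g \<Longrightarrow> vc K (id2 K g) \<alpha> = \<alpha> \<and> vc K \<alpha> (id2 K f) = \<alpha>"
    and hc_hom2: "\<And>A B C f f' g g' \<alpha> \<beta>. f \<in> hom1 K A B \<Longrightarrow> f' \<in> hom1 K A B \<Longrightarrow>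
      g \<in> hom1 K B C \<Longrightarrow> g' \<in> hom1 K B C \<Longrightarrow> \<alpha> \<in> hom2 K f f' \<Longrightarrow> \<beta> \<in> hom2 K g g' \<Longrightarrow>
      hc K \<beta> \<alpha> \<in> hom2 K (cmp K g f) (cmp K g' f')"
    and hc_assoc_hom2: "\<And>A B C D f f' g g' h h' \<alpha> \<beta> \<gamma>. f \<in> hom1 K A B \<Longrightarrow> f' \<in> hom1 K A B \<Longrightarrow>
      g \<in> hom1 K B C \<Longrightarrow> g' \<in> hom1 K B C \<Longrightarrow> h \<in> hom1 K C D \<Longrightarrow> h' \<in> hom1 K C D \<Longrightarrow>
      \<alpha> \<in> hom2 K f f' \<Longrightarrow> \<beta> \<in> hom2 K g g' \<Longrightarrow> \<gamma> \<in> hom2 K h h' \<Longrightarrow>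
      hc K \<gamma> (hc K \<beta> \<alpha>) = hc K (hc K \<gamma> \<beta>) \<alpha>"
    and hc_id2_idn_hom2: "\<And>A B f f' \<alpha>. f \<in> hom1 K A B \<Longrightarrow> f' \<in> hom1 K A B \<Longrightarrow> \<alpha> \<in> hom2 K f f' \<Longrightarrow>
      hc K (id2 K (idn K B)) \<alpha> = \<alpha> \<and> hc K \<alpha> (id2 K (idn K A)) = \<alpha>"
    and hc_id2_id2_hom1: "\<And>A B C f g. f \<in> hom1 K A B \<Longrightarrow> g \<in> hom1 K B C \<Longrightarrow>
      hc K (id2 K g) (id2 K f) = id2 K (cmp K g f)"
    and interchange_hom2: "\<And>A B C f f' f'' g g' g'' \<alpha> \<alpha>' \<beta> \<beta>'.
      f \<in> hom1 K A B \<Longrightarrow> f' \<in> hom1 K A B \<Longrightarrow> f'' \<in> hom1 K A B \<Longrightarrow>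
      g \<in> hom1 K B C \<Longrightarrow> g' \<in> hom1 K B C \<Longrightarrow> g'' \<in> hom1 K B C \<Longrightarrow>
      \<alpha> \<in> hom2 K f f' \<Longrightarrow> \<alpha>' \<in> hom2 K f' f'' \<Longrightarrow> \<beta> \<in> hom2 K g g' \<Longrightarrow> \<beta>' \<in> hom2 K g' g'' \<Longrightarrow>
      hc K (vc K \<beta>' \<beta>) (vc K \<alpha>' \<alpha>) = vc K (hc K \<beta>' \<alpha>') (hc K \<beta> \<alpha>)"

lemma strict_2category_iff: "strict_2category K \<longleftrightarrow> strict_2cat K"
  unfolding strict_2category_def strict_2cat_def by (simp only: conj_assoc Ball_def)

context strict_2category
begin

lemma Ar_hom1: "f \<in> Ar K \<Longrightarrow> f \<in> hom1 K (src K f) (trg K f)"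
  by (simp add: hom1_def)

lemma Ce_hom2: "\<alpha> \<in> Ce K \<Longrightarrow> \<alpha> \<in> hom2 K (dom2 K \<alpha>) (cod2 K \<alpha>)"
  by (simp add: hom2_def)

lemma src_Ob [simp]: "f \<in> Ar K \<Longrightarrow> src K f \<in> Ob K"
  and trg_Ob [simp]: "f \<in> Ar K \<Longrightarrow> trg K f \<in> Ob K"
  using Ar_src_trg by blast+

lemma idn_Ar [simp]: "A \<in> Ob K \<Longrightarrow> idn K A \<in> Ar K"
  and src_idn [simp]: "A \<in> Ob K \<Longrightarrow> src K (idn K A) = A"
  and trg_idn [simp]: "A \<in> Ob K \<Longrightarrow> trg K (idn K A) = A"
  using idn_hom1 by (simp_all add: hom1_def)

lemma cmp_Ar [simp]: "f \<in> Ar K \<Longrightarrow> g \<in> Ar K \<Longrightarrow> trg K f = src K g \<Longrightarrow> cmp K g f \<in> Ar K"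
  and src_cmp [simp]: "f \<in> Ar K \<Longrightarrow> g \<in> Ar K \<Longrightarrow> trg K f = src K g \<Longrightarrow> src K (cmp K g f) = src K f"
  and trg_cmp [simp]: "f \<in> Ar K \<Longrightarrow> g \<in> Ar K \<Longrightarrow> trg K f = src K g \<Longrightarrow> trg K (cmp K g f) = trg K g"
  using cmp_hom1[OF Ar_hom1[of f], of g "trg K g"] by (simp_all add: hom1_def)

lemma cmp_assoc [simp]:
  "f \<in> Ar K \<Longrightarrow> g \<in> Ar K \<Longrightarrow> h \<in> Ar K \<Longrightarrow> trg K f = src K g \<Longrightarrow> trg K g = src K h \<Longrightarrow>
   cmp K (cmp K h g) f = cmp K h (cmp K g f)"
  using cmp_assoc_hom1[OF Ar_hom1[of f], of g "trg K g" h "trg K h"] by (simp add: hom1_def)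

lemma cmp_idn_left [simp]: "f \<in> Ar K \<Longrightarrow> B = trg K f \<Longrightarrow> cmp K (idn K B) f = f"
  and cmp_idn_right [simp]: "f \<in> Ar K \<Longrightarrow> A = src K f \<Longrightarrow> cmp K f (idn K A) = f"
  using cmp_idn_hom1[OF Ar_hom1] by simp_all

lemma dom2_Ar [simp]: "\<alpha> \<in> Ce K \<Longrightarrow> dom2 K \<alpha> \<in> Ar K"
  and cod2_Ar [simp]: "\<alpha> \<in> Ce K \<Longrightarrow> cod2 K \<alpha> \<in> Ar K"
  and src_cod2 [simp]: "\<alpha> \<in> Ce K \<Longrightarrow> src K (cod2 K \<alpha>) = src K (dom2 K \<alpha>)"
  and trg_cod2 [simp]: "\<alpha> \<in> Ce K \<Longrightarrow> trg K (cod2 K \<alpha>) = trg K (dom2 K \<alpha>)"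
  using Ce_parallel unfolding hom1_def by force+

lemma hom2_cod_hom1: "\<alpha> \<in> hom2 K f g \<Longrightarrow> f \<in> hom1 K A B \<Longrightarrow> g \<in> hom1 K A B"
  using src_cod2[of \<alpha>] trg_cod2[of \<alpha>] cod2_Ar[of \<alpha>] by (simp add: hom1_def hom2_def)

lemma hom2_from_idn:
  assumes "A \<in> Ob K" and "\<eta> \<in> hom2 K (idn K A) b"
  shows "\<eta> \<in> Ce K" and "dom2 K \<eta> = idn K A" and "cod2 K \<eta> = b"
    and "b \<in> Ar K" and "src K b = A" and "trg K b = A"
  using assms hom2_cod_hom1[OF assms(2) idn_hom1[OF assms(1)]] by (simp_all add: hom1_def hom2_def)

lemma id2_Ce [simp]: "f \<in> Ar K \<Longrightarrow> id2 K f \<in> Ce K"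
  and dom2_id2 [simp]: "f \<in> Ar K \<Longrightarrow> dom2 K (id2 K f) = f"
  and cod2_id2 [simp]: "f \<in> Ar K \<Longrightarrow> cod2 K (id2 K f) = f"
  using id2_hom2 by (simp_all add: hom2_def)

lemma vc_Ce [simp]: "\<alpha> \<in> Ce K \<Longrightarrow> \<beta> \<in> Ce K \<Longrightarrow> cod2 K \<alpha> = dom2 K \<beta> \<Longrightarrow> vc K \<beta> \<alpha> \<in> Ce K"
  and dom2_vc [simp]: "\<alpha> \<in> Ce K \<Longrightarrow> \<beta> \<in> Ce K \<Longrightarrow> cod2 K \<alpha> = dom2 K \<beta> \<Longrightarrow> dom2 K (vc K \<beta> \<alpha>) = dom2 K \<alpha>"
  and cod2_vc [simp]: "\<alpha> \<in> Ce K \<Longrightarrow> \<beta> \<in> Ce K \<Longrightarrow> cod2 K \<alpha> = dom2 K \<beta> \<Longrightarrow> cod2 K (vc K \<beta> \<alpha>) = cod2 K \<beta>"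
  using vc_hom2[OF Ce_hom2[of \<alpha>], of \<beta> "cod2 K \<beta>"] by (simp_all add: hom2_def)

lemma hc_Ce_hom2:
  assumes "\<alpha> \<in> Ce K" and "\<beta> \<in> Ce K" and "trg K (dom2 K \<alpha>) = src K (dom2 K \<beta>)"
  shows "hc K \<beta> \<alpha> \<in> hom2 K (cmp K (dom2 K \<beta>) (dom2 K \<alpha>)) (cmp K (cod2 K \<beta>) (cod2 K \<alpha>))"
  using assms
  by (intro hc_hom2[where A = "src K (dom2 K \<alpha>)" and B = "trg K (dom2 K \<alpha>)"
        and C = "trg K (dom2 K \<beta>)"])
    (simp_all add: hom1_def hom2_def)

lemma hc_Ce [simp]: "\<alpha> \<in> Ce K \<Longrightarrow> \<beta> \<in> Ce K \<Longrightarrow> trg K (dom2 K \<alpha>) = src K (dom2 K \<beta>) \<Longrightarrow> hc K \<beta> \<alpha> \<in> Ce K"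
  and dom2_hc [simp]: "\<alpha> \<in> Ce K \<Longrightarrow> \<beta> \<in> Ce K \<Longrightarrow> trg K (dom2 K \<alpha>) = src K (dom2 K \<beta>) \<Longrightarrow>
    dom2 K (hc K \<beta> \<alpha>) = cmp K (dom2 K \<beta>) (dom2 K \<alpha>)"
  and cod2_hc [simp]: "\<alpha> \<in> Ce K \<Longrightarrow> \<beta> \<in> Ce K \<Longrightarrow> trg K (dom2 K \<alpha>) = src K (dom2 K \<beta>) \<Longrightarrow>
    cod2 K (hc K \<beta> \<alpha>) = cmp K (cod2 K \<beta>) (cod2 K \<alpha>)"
  using hc_Ce_hom2 by (simp_all add: hom2_def)

lemma vc_assoc [simp]:
  "\<alpha> \<in> Ce K \<Longrightarrow> \<beta> \<in> Ce K \<Longrightarrow> \<gamma> \<in> Ce K \<Longrightarrow> cod2 K \<alpha> = dom2 K \<beta> \<Longrightarrow> cod2 K \<beta> = dom2 K \<gamma> \<Longrightarrow>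
   vc K (vc K \<gamma> \<beta>) \<alpha> = vc K \<gamma> (vc K \<beta> \<alpha>)"
  using vc_assoc_hom2[OF Ce_hom2[of \<alpha>], of \<beta> "cod2 K \<beta>" \<gamma> "cod2 K \<gamma>"] by (simp add: hom2_def)

lemma vc_id2_left [simp]: "\<alpha> \<in> Ce K \<Longrightarrow> g = cod2 K \<alpha> \<Longrightarrow> vc K (id2 K g) \<alpha> = \<alpha>"
  and vc_id2_right [simp]: "\<alpha> \<in> Ce K \<Longrightarrow> f = dom2 K \<alpha> \<Longrightarrow> vc K \<alpha> (id2 K f) = \<alpha>"
  using vc_id2_hom2[OF Ce_hom2] by simp_all

lemma hc_assoc [simp]:
  "\<alpha> \<in> Ce K \<Longrightarrow> \<beta> \<in> Ce K \<Longrightarrow> \<gamma> \<in> Ce K \<Longrightarrow> trg K (dom2 K \<alpha>) = src K (dom2 K \<beta>) \<Longrightarrow>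
   trg K (dom2 K \<beta>) = src K (dom2 K \<gamma>) \<Longrightarrow> hc K (hc K \<gamma> \<beta>) \<alpha> = hc K \<gamma> (hc K \<beta> \<alpha>)"
  by (rule hc_assoc_hom2[where A = "src K (dom2 K \<alpha>)" and B = "trg K (dom2 K \<alpha>)"
        and C = "trg K (dom2 K \<beta>)" and D = "trg K (dom2 K \<gamma>)", symmetric])
            (simp_all add: hom1_def hom2_def)

lemma hc_id2_idn_left [simp]: "\<alpha> \<in> Ce K \<Longrightarrow> B = trg K (dom2 K \<alpha>) \<Longrightarrow> hc K (id2 K (idn K B)) \<alpha> = \<alpha>"
  and hc_id2_idn_right [simp]: "\<alpha> \<in> Ce K \<Longrightarrow> A = src K (dom2 K \<alpha>) \<Longrightarrow> hc K \<alpha> (id2 K (idn K A)) = \<alpha>"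
  using hc_id2_idn_hom2[of "dom2 K \<alpha>" "src K (dom2 K \<alpha>)" "trg K (dom2 K \<alpha>)" "cod2 K \<alpha>" \<alpha>]
  by (simp_all add: hom1_def hom2_def)

lemma hc_id2_id2 [simp]:
  "f \<in> Ar K \<Longrightarrow> g \<in> Ar K \<Longrightarrow> trg K f = src K g \<Longrightarrow> hc K (id2 K g) (id2 K f) = id2 K (cmp K g f)"
  using hc_id2_id2_hom1[OF Ar_hom1[of f], of g "trg K g"] by (simp add: hom1_def)

lemma hc_id2_hc_id2 [simp]:
  "f \<in> Ar K \<Longrightarrow> g \<in> Ar K \<Longrightarrow> \<alpha> \<in> Ce K \<Longrightarrow> trg K f = src K g \<Longrightarrow> trg K (dom2 K \<alpha>) = src K f \<Longrightarrow>
   hc K (id2 K g) (hc K (id2 K f) \<alpha>) = hc K (id2 K (cmp K g f)) \<alpha>"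
  using hc_assoc[of \<alpha> "id2 K f" "id2 K g"] by simp

lemma interchange:
  "\<alpha> \<in> Ce K \<Longrightarrow> \<alpha>' \<in> Ce K \<Longrightarrow> \<beta> \<in> Ce K \<Longrightarrow> \<beta>' \<in> Ce K \<Longrightarrow>
   cod2 K \<alpha> = dom2 K \<alpha>' \<Longrightarrow> cod2 K \<beta> = dom2 K \<beta>' \<Longrightarrow> trg K (dom2 K \<alpha>) = src K (dom2 K \<beta>) \<Longrightarrow>
   vc K (hc K \<beta>' \<alpha>') (hc K \<beta> \<alpha>) = hc K (vc K \<beta>' \<beta>) (vc K \<alpha>' \<alpha>)"
  by (rule interchange_hom2[where A = "src K (dom2 K \<alpha>)" and B = "trg K (dom2 K \<alpha>)"
        and C = "trg K (dom2 K \<beta>)", symmetric])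
            (auto simp: hom1_def hom2_def simp flip: src_cod2 trg_cod2)

lemma whisker_left_vc [simp]:
  "g \<in> Ar K \<Longrightarrow> \<alpha> \<in> Ce K \<Longrightarrow> \<alpha>' \<in> Ce K \<Longrightarrow> cod2 K \<alpha> = dom2 K \<alpha>' \<Longrightarrow> trg K (dom2 K \<alpha>) = src K g \<Longrightarrow>
   hc K (id2 K g) (vc K \<alpha>' \<alpha>) = vc K (hc K (id2 K g) \<alpha>') (hc K (id2 K g) \<alpha>)"
  using interchange[of \<alpha> \<alpha>' "id2 K g" "id2 K g"] by simp

lemma whisker_right_vc [simp]:
  "f \<in> Ar K \<Longrightarrow> \<beta> \<in> Ce K \<Longrightarrow> \<beta>' \<in> Ce K \<Longrightarrow> cod2 K \<beta> = dom2 K \<beta>' \<Longrightarrow> trg K f = src K (dom2 K \<beta>) \<Longrightarrow>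
   hc K (vc K \<beta>' \<beta>) (id2 K f) = vc K (hc K \<beta>' (id2 K f)) (hc K \<beta> (id2 K f))"
  using interchange[of "id2 K f" "id2 K f" \<beta> \<beta>'] by simp

lemma hc_eq_vc_whisker_left_first:
  "\<alpha> \<in> Ce K \<Longrightarrow> \<beta> \<in> Ce K \<Longrightarrow> trg K (dom2 K \<alpha>) = src K (dom2 K \<beta>) \<Longrightarrow>
   hc K \<beta> \<alpha> = vc K (hc K \<beta> (id2 K (cod2 K \<alpha>))) (hc K (id2 K (dom2 K \<beta>)) \<alpha>)"
  using interchange[of \<alpha> "id2 K (cod2 K \<alpha>)" "id2 K (dom2 K \<beta>)" \<beta>] by simp

lemma hc_eq_vc_whisker_right_first:
  "\<alpha> \<in> Ce K \<Longrightarrow> \<beta> \<in> Ce K \<Longrightarrow> trg K (dom2 K \<alpha>) = src K (dom2 K \<beta>) \<Longrightarrow>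
   hc K \<beta> \<alpha> = vc K (hc K (id2 K (cod2 K \<beta>)) \<alpha>) (hc K \<beta> (id2 K (dom2 K \<alpha>)))"
  using interchange[of "id2 K (dom2 K \<alpha>)" \<alpha> \<beta> "id2 K (cod2 K \<beta>)"] by simp

text \<open>The simp rules above put composites into a normal form: vertical and horizontal
  composites nested to the right, whiskerings distributed over vertical composites.
  Equations between 2-cells are applied inside such right-nested chains with:\<close>

lemma vc_reduce:
  "vc K \<beta> \<alpha> = \<gamma> \<Longrightarrow> \<tau> \<in> Ce K \<Longrightarrow> \<alpha> \<in> Ce K \<Longrightarrow> \<beta> \<in> Ce K \<Longrightarrow>
   cod2 K \<tau> = dom2 K \<alpha> \<Longrightarrow> cod2 K \<alpha> = dom2 K \<beta> \<Longrightarrow> vc K \<beta> (vc K \<alpha> \<tau>) = vc K \<gamma> \<tau>"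
  by (metis vc_assoc)

end

lemma comonad2_typing:
  assumes "comonad2 K A b \<Delta> \<epsilon>"
  shows "A \<in> Ob K" and "b \<in> Ar K" and "src K b = A" and "trg K b = A"
    and "\<Delta> \<in> Ce K" and "dom2 K \<Delta> = b" and "cod2 K \<Delta> = cmp K b b"
    and "\<epsilon> \<in> Ce K" and "dom2 K \<epsilon> = b" and "cod2 K \<epsilon> = idn K A"
  using assms unfolding comonad2_def endo_def hom1_def hom2_def by auto

section \<open>Colax functors preserve comonads\<close>

locale pre_2functor =
  K: strict_2category K + K': strict_2category K'
  for K :: "('o,'a,'c) cat2" and K' :: "('p,'b,'d) cat2" +
  fixes Fo :: "'o \<Rightarrow> 'p" and F1 :: "'a \<Rightarrow> 'b" and F2 :: "'c \<Rightarrow> 'd"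
  assumes pre_functor: "pre_functor K K' Fo F1 F2"
begin

lemma Fo_Ob [simp]: "A \<in> Ob K \<Longrightarrow> Fo A \<in> Ob K'"
  using pre_functor unfolding pre_functor_def by blast

lemma F1_hom1: "f \<in> hom1 K A B \<Longrightarrow> F1 f \<in> hom1 K' (Fo A) (Fo B)"
  using pre_functor unfolding pre_functor_def by blast

lemma F2_hom2: "\<alpha> \<in> hom2 K f g \<Longrightarrow> F2 \<alpha> \<in> hom2 K' (F1 f) (F1 g)"
  using pre_functor unfolding pre_functor_def by blast

lemma F1_Ar [simp]: "f \<in> Ar K \<Longrightarrow> F1 f \<in> Ar K'"
  and src_F1 [simp]: "f \<in> Ar K \<Longrightarrow> src K' (F1 f) = Fo (src K f)"
  and trg_F1 [simp]: "f \<in> Ar K \<Longrightarrow> trg K' (F1 f) = Fo (trg K f)"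
  using F1_hom1[OF K.Ar_hom1] by (simp_all add: hom1_def)

lemma F2_Ce [simp]: "\<alpha> \<in> Ce K \<Longrightarrow> F2 \<alpha> \<in> Ce K'"
  and dom2_F2 [simp]: "\<alpha> \<in> Ce K \<Longrightarrow> dom2 K' (F2 \<alpha>) = F1 (dom2 K \<alpha>)"
  and cod2_F2 [simp]: "\<alpha> \<in> Ce K \<Longrightarrow> cod2 K' (F2 \<alpha>) = F1 (cod2 K \<alpha>)"
  using F2_hom2[OF K.Ce_hom2] by (simp_all add: hom2_def)

lemma F2_vc:
  "\<alpha> \<in> Ce K \<Longrightarrow> \<beta> \<in> Ce K \<Longrightarrow> cod2 K \<alpha> = dom2 K \<beta> \<Longrightarrow> F2 (vc K \<beta> \<alpha>) = vc K' (F2 \<beta>) (F2 \<alpha>)"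
  using pre_functor unfolding pre_functor_def hom2_def by blast

lemma F2_id2 [simp]: "f \<in> Ar K \<Longrightarrow> F2 (id2 K f) = id2 K' (F1 f)"
  using pre_functor unfolding pre_functor_def by blast

end

lemma pre_2functorI:
  "strict_2cat K \<Longrightarrow> strict_2cat K' \<Longrightarrow> pre_functor K K' Fo F1 F2 \<Longrightarrow> pre_2functor K K' Fo F1 F2"
  unfolding pre_2functor_def pre_2functor_axioms_def strict_2category_iff by blast

locale colax_2functor = pre_2functor +
  fixes C2 :: "'a \<Rightarrow> 'a \<Rightarrow> 'd" and C0 :: "'o \<Rightarrow> 'd"
  assumes colax_functor: "colax_functor K K' Fo F1 F2 C2 C0"
begin

lemma C2_hom2:
  "f \<in> hom1 K A B \<Longrightarrow> g \<in> hom1 K B C \<Longrightarrow> C2 g f \<in> hom2 K' (F1 (cmp K g f)) (cmp K' (F1 g) (F1 f))"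
  using colax_functor unfolding colax_functor_def by (elim conjE) blast

lemma C2_Ce [simp]: "f \<in> Ar K \<Longrightarrow> g \<in> Ar K \<Longrightarrow> trg K f = src K g \<Longrightarrow> C2 g f \<in> Ce K'"
  and dom2_C2 [simp]: "f \<in> Ar K \<Longrightarrow> g \<in> Ar K \<Longrightarrow> trg K f = src K g \<Longrightarrow>
    dom2 K' (C2 g f) = F1 (cmp K g f)"
  and cod2_C2 [simp]: "f \<in> Ar K \<Longrightarrow> g \<in> Ar K \<Longrightarrow> trg K f = src K g \<Longrightarrow>
    cod2 K' (C2 g f) = cmp K' (F1 g) (F1 f)"
  using C2_hom2[OF K.Ar_hom1[of f], of g "trg K g"] by (simp_all add: hom1_def hom2_def)

lemma C0_Ce [simp]: "A \<in> Ob K \<Longrightarrow> C0 A \<in> Ce K'"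
  and dom2_C0 [simp]: "A \<in> Ob K \<Longrightarrow> dom2 K' (C0 A) = F1 (idn K A)"
  and cod2_C0 [simp]: "A \<in> Ob K \<Longrightarrow> cod2 K' (C0 A) = idn K' (Fo A)"
  using colax_functor unfolding colax_functor_def hom2_def by blast+

lemma C2_natural_hom2:
  "f \<in> hom1 K A B \<Longrightarrow> f' \<in> hom1 K A B \<Longrightarrow> g \<in> hom1 K B C \<Longrightarrow> g' \<in> hom1 K B C \<Longrightarrow>
   \<alpha> \<in> hom2 K f f' \<Longrightarrow> \<beta> \<in> hom2 K g g' \<Longrightarrow>
   vc K' (hc K' (F2 \<beta>) (F2 \<alpha>)) (C2 g f) = vc K' (C2 g' f') (F2 (hc K \<beta> \<alpha>))"
  using colax_functor unfolding colax_functor_def by (elim conjE) blast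

lemma C2_natural:
  "\<alpha> \<in> Ce K \<Longrightarrow> \<beta> \<in> Ce K \<Longrightarrow> trg K (dom2 K \<alpha>) = src K (dom2 K \<beta>) \<Longrightarrow>
   vc K' (hc K' (F2 \<beta>) (F2 \<alpha>)) (C2 (dom2 K \<beta>) (dom2 K \<alpha>))
     = vc K' (C2 (cod2 K \<beta>) (cod2 K \<alpha>)) (F2 (hc K \<beta> \<alpha>))"
  by (rule C2_natural_hom2[where A = "src K (dom2 K \<alpha>)" and B = "trg K (dom2 K \<alpha>)"
        and C = "trg K (dom2 K \<beta>)"]) (simp_all add: hom1_def hom2_def)

lemma C2_coassoc:
  "f \<in> Ar K \<Longrightarrow> g \<in> Ar K \<Longrightarrow> h \<in> Ar K \<Longrightarrow> trg K f = src K g \<Longrightarrow> trg K g = src K h \<Longrightarrow>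
   vc K' (hc K' (id2 K' (F1 h)) (C2 g f)) (C2 h (cmp K g f))
     = vc K' (hc K' (C2 h g) (id2 K' (F1 f))) (C2 (cmp K h g) f)"
  using colax_functor unfolding colax_functor_def hom1_def by blast

lemma C0_counit_left:
  "f \<in> Ar K \<Longrightarrow> B = trg K f \<Longrightarrow> vc K' (hc K' (C0 B) (id2 K' (F1 f))) (C2 (idn K B) f) = id2 K' (F1 f)"
  and C0_counit_right:
  "f \<in> Ar K \<Longrightarrow> A = src K f \<Longrightarrow> vc K' (hc K' (id2 K' (F1 f)) (C0 A)) (C2 f (idn K A)) = id2 K' (F1 f)"
  using colax_functor unfolding colax_functor_def hom1_def by blast+

end

lemma colax_2functorI:
  "strict_2cat K \<Longrightarrow> strict_2cat K' \<Longrightarrow> colax_functor K K' Fo F1 F2 C2 C0 \<Longrightarrow>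
   colax_2functor K K' Fo F1 F2 C2 C0"
  by (simp add: colax_2functor_def colax_2functor_axioms_def colax_functor_def pre_2functorI)

context colax_2functor
begin

lemma comonad2_image_coassoc:
  assumes comonad: "comonad2 K A b \<Delta> \<epsilon>"
  defines "\<Delta>' \<equiv> vc K' (C2 b b) (F2 \<Delta>)"
  shows "vc K' (hc K' \<Delta>' (id2 K' (F1 b))) \<Delta>' = vc K' (hc K' (id2 K' (F1 b)) \<Delta>') \<Delta>'"
proof -
  note typing [simp] = comonad2_typing[OF comonad]
  have coassoc: "vc K (hc K \<Delta> (id2 K b)) \<Delta> = vc K (hc K (id2 K b) \<Delta>) \<Delta>"
    using comonad unfolding comonad2_def by blast
  let ?d = "F1 b" and ?bb = "cmp K b b"
  have nat_left: "vc K' (hc K' (F2 \<Delta>) (id2 K' ?d)) (C2 b b) = vc K' (C2 ?bb b)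
      (F2 (hc K \<Delta> (id2 K b)))"
    using C2_natural[of "id2 K b" \<Delta>] by simp
  have nat_right: "vc K' (hc K' (id2 K' ?d) (F2 \<Delta>)) (C2 b b) = vc K' (C2 b ?bb)
      (F2 (hc K (id2 K b) \<Delta>))"
    using C2_natural[of \<Delta> "id2 K b"] by simp
  have C2_bbb: "vc K' (hc K' (id2 K' ?d) (C2 b b)) (C2 b ?bb) = vc K' (hc K' (C2 b b) (id2 K' ?d))
      (C2 ?bb b)"
    using C2_coassoc[of b b b] by simp
  have F2_coassoc: "vc K' (F2 (hc K \<Delta> (id2 K b))) (F2 \<Delta>) = vc K' (F2 (hc K (id2 K b) \<Delta>)) (F2 \<Delta>)"
    using coassoc by (simp flip: F2_vc)
  have "vc K' (hc K' \<Delta>' (id2 K' ?d)) \<Delta>'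
      = vc K' (hc K' (C2 b b) (id2 K' ?d))
          (vc K' (hc K' (F2 \<Delta>) (id2 K' ?d)) (vc K' (C2 b b) (F2 \<Delta>)))"
    by (simp add: \<Delta>'_def)
  also have "\<dots> = vc K' (hc K' (C2 b b) (id2 K' ?d))
      (vc K' (C2 ?bb b) (vc K' (F2 (hc K \<Delta> (id2 K b))) (F2 \<Delta>)))"
    by (subst K'.vc_reduce[OF nat_left]) simp_all
  also have "\<dots> = vc K' (hc K' (id2 K' ?d) (C2 b b))
      (vc K' (C2 b ?bb) (vc K' (F2 (hc K \<Delta> (id2 K b))) (F2 \<Delta>)))"
    by (subst K'.vc_reduce[OF C2_bbb[symmetric]]) simp_all
  also have "\<dots> = vc K' (hc K' (id2 K' ?d) (C2 b b))
      (vc K' (C2 b ?bb) (vc K' (F2 (hc K (id2 K b) \<Delta>)) (F2 \<Delta>)))"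
    by (simp only: F2_coassoc)
  also have "\<dots> = vc K' (hc K' (id2 K' ?d) (C2 b b))
      (vc K' (hc K' (id2 K' ?d) (F2 \<Delta>)) (vc K' (C2 b b) (F2 \<Delta>)))"
    by (subst K'.vc_reduce[OF nat_right[symmetric]]) simp_all
  also have "\<dots> = vc K' (hc K' (id2 K' ?d) \<Delta>') \<Delta>'"
    by (simp add: \<Delta>'_def)
  finally show ?thesis .
qed

lemma comonad2_image_counit_left:
  assumes comonad: "comonad2 K A b \<Delta> \<epsilon>"
  shows "vc K' (hc K' (vc K' (C0 A) (F2 \<epsilon>)) (id2 K' (F1 b))) (vc K' (C2 b b) (F2 \<Delta>))
    = id2 K' (F1 b)"
proof -
  note typing [simp] = comonad2_typing[OF comonad]
  have counit: "vc K (hc K \<epsilon> (id2 K b)) \<Delta> = id2 K b"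
    using comonad unfolding comonad2_def by blast
  have nat: "vc K' (hc K' (F2 \<epsilon>) (id2 K' (F1 b))) (C2 b b) = vc K' (C2 (idn K A) b)
      (F2 (hc K \<epsilon> (id2 K b)))"
    using C2_natural[of "id2 K b" \<epsilon>] by simp
  have C0_counit: "vc K' (hc K' (C0 A) (id2 K' (F1 b))) (C2 (idn K A) b) = id2 K' (F1 b)"
    using C0_counit_left[of b A] by simp
  have "vc K' (hc K' (vc K' (C0 A) (F2 \<epsilon>)) (id2 K' (F1 b))) (vc K' (C2 b b) (F2 \<Delta>))
      = vc K' (hc K' (C0 A) (id2 K' (F1 b)))
          (vc K' (hc K' (F2 \<epsilon>) (id2 K' (F1 b))) (vc K' (C2 b b) (F2 \<Delta>)))"
    by simp
  also have "\<dots> = vc K' (hc K' (C0 A) (id2 K' (F1 b)))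
      (vc K' (C2 (idn K A) b) (vc K' (F2 (hc K \<epsilon> (id2 K b))) (F2 \<Delta>)))"
    by (subst K'.vc_reduce[OF nat]) simp_all
  also have "\<dots> = vc K' (F2 (hc K \<epsilon> (id2 K b))) (F2 \<Delta>)"
    by (subst K'.vc_reduce[OF C0_counit]) simp_all
  also have "\<dots> = id2 K' (F1 b)"
    using counit by (simp flip: F2_vc)
  finally show ?thesis .
qed

lemma comonad2_image_counit_right:
  assumes comonad: "comonad2 K A b \<Delta> \<epsilon>"
  shows "vc K' (hc K' (id2 K' (F1 b)) (vc K' (C0 A) (F2 \<epsilon>))) (vc K' (C2 b b) (F2 \<Delta>))
    = id2 K' (F1 b)"
proof -
  note typing [simp] = comonad2_typing[OF comonad]
  have counit: "vc K (hc K (id2 K b) \<epsilon>) \<Delta> = id2 K b"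
    using comonad unfolding comonad2_def by blast
  have nat: "vc K' (hc K' (id2 K' (F1 b)) (F2 \<epsilon>)) (C2 b b) = vc K' (C2 b (idn K A))
      (F2 (hc K (id2 K b) \<epsilon>))"
    using C2_natural[of \<epsilon> "id2 K b"] by simp
  have C0_counit: "vc K' (hc K' (id2 K' (F1 b)) (C0 A)) (C2 b (idn K A)) = id2 K' (F1 b)"
    using C0_counit_right[of b A] by simp
  have "vc K' (hc K' (id2 K' (F1 b)) (vc K' (C0 A) (F2 \<epsilon>))) (vc K' (C2 b b) (F2 \<Delta>))
      = vc K' (hc K' (id2 K' (F1 b)) (C0 A))
          (vc K' (hc K' (id2 K' (F1 b)) (F2 \<epsilon>)) (vc K' (C2 b b) (F2 \<Delta>)))"
    by simp
  also have "\<dots> = vc K' (hc K' (id2 K' (F1 b)) (C0 A))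
      (vc K' (C2 b (idn K A)) (vc K' (F2 (hc K (id2 K b) \<epsilon>)) (F2 \<Delta>)))"
    by (subst K'.vc_reduce[OF nat]) simp_all
  also have "\<dots> = vc K' (F2 (hc K (id2 K b) \<epsilon>)) (F2 \<Delta>)"
    by (subst K'.vc_reduce[OF C0_counit]) simp_all
  also have "\<dots> = id2 K' (F1 b)"
    using counit by (simp flip: F2_vc)
  finally show ?thesis .
qed

lemma comonad2_image:
  assumes "comonad2 K A b \<Delta> \<epsilon>"
  shows "comonad2 K' (Fo A) (F1 b) (vc K' (C2 b b) (F2 \<Delta>)) (vc K' (C0 A) (F2 \<epsilon>))"
  using comonad2_image_coassoc[OF assms] comonad2_image_counit_left[OF assms]
    comonad2_image_counit_right[OF assms] comonad2_typing[OF assms]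
  unfolding comonad2_def endo_def hom1_def hom2_def by simp

end

section \<open>The coaction induced by a colax transformation\<close>

locale colax_transformation =
  F: colax_2functor K K' Fo F1 F2 FC2 FC0 + G: colax_2functor K K' Go G1 G2 GC2 GC0
  for K K' Fo F1 F2 FC2 FC0 Go G1 G2 GC2 GC0 +
  fixes \<phi>0 :: "'o \<Rightarrow> 'b" and \<phi>1 :: "'a \<Rightarrow> 'd"
  assumes colax_nat: "colax_nat K K' Fo F1 F2 FC2 FC0 Go G1 G2 GC2 GC0 \<phi>0 \<phi>1"
begin

lemma \<phi>0_hom1: "A \<in> Ob K \<Longrightarrow> \<phi>0 A \<in> hom1 K' (Fo A) (Go A)"
  using colax_nat unfolding colax_nat_def by blast

lemma \<phi>1_hom2: "f \<in> hom1 K A B \<Longrightarrow> \<phi>1 f \<in> hom2 K' (cmp K' (\<phi>0 B) (F1 f)) (cmp K' (G1 f) (\<phi>0 A))"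
  using colax_nat unfolding colax_nat_def by (elim conjE) blast

lemma \<phi>0_Ar [simp]: "A \<in> Ob K \<Longrightarrow> \<phi>0 A \<in> Ar K'"
  and src_\<phi>0 [simp]: "A \<in> Ob K \<Longrightarrow> src K' (\<phi>0 A) = Fo A"
  and trg_\<phi>0 [simp]: "A \<in> Ob K \<Longrightarrow> trg K' (\<phi>0 A) = Go A"
  using \<phi>0_hom1 by (simp_all add: hom1_def)

lemma \<phi>1_Ce [simp]: "f \<in> Ar K \<Longrightarrow> \<phi>1 f \<in> Ce K'"
  and dom2_\<phi>1 [simp]: "f \<in> Ar K \<Longrightarrow> dom2 K' (\<phi>1 f) = cmp K' (\<phi>0 (trg K f)) (F1 f)"
  and cod2_\<phi>1 [simp]: "f \<in> Ar K \<Longrightarrow> cod2 K' (\<phi>1 f) = cmp K' (G1 f) (\<phi>0 (src K f))"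
  using \<phi>1_hom2[OF F.K.Ar_hom1] by (simp_all add: hom2_def)

lemma \<phi>1_cmp:
  "f \<in> hom1 K A B \<Longrightarrow> g \<in> hom1 K B C \<Longrightarrow>
   vc K' (hc K' (GC2 g f) (id2 K' (\<phi>0 A))) (\<phi>1 (cmp K g f))
     = vc K' (hc K' (id2 K' (G1 g)) (\<phi>1 f))
         (vc K' (hc K' (\<phi>1 g) (id2 K' (F1 f))) (hc K' (id2 K' (\<phi>0 C)) (FC2 g f)))"
  using colax_nat unfolding colax_nat_def by (elim conjE) blast

lemma \<phi>1_idn:
  "A \<in> Ob K \<Longrightarrow> vc K' (hc K' (GC0 A) (id2 K' (\<phi>0 A))) (\<phi>1 (idn K A)) = hc K' (id2 K' (\<phi>0 A)) (FC0 A)"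
  using colax_nat unfolding colax_nat_def by blast

text \<open>The 2-cell \<open>\<lambda>\<close> of part (i); the argument \<open>L\<close> plays the role of \<open>\<F>\<^sup>0\<^sub>A\<close>.\<close>

definition coaction :: "'o \<Rightarrow> 'c \<Rightarrow> 'd \<Rightarrow> 'd" where
  "coaction A \<eta> L =
    vc K' (hc K' (G2 \<eta>) (id2 K' (\<phi>0 A))) (vc K' (\<phi>1 (idn K A)) (hc K' (id2 K' (\<phi>0 A)) L))"

lemma coaction_counit:
  assumes A: "A \<in> Ob K" and \<eta>: "\<eta> \<in> hom2 K (idn K A) b" and \<epsilon>: "\<epsilon> \<in> hom2 K b (idn K A)"
    and \<epsilon>_\<eta>: "vc K \<epsilon> \<eta> = id2 K (idn K A)"
    and L: "L \<in> hom2 K' (idn K' (Fo A)) (F1 (idn K A))"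
    and C0_L: "vc K' (FC0 A) L = id2 K' (idn K' (Fo A))"
  shows "vc K' (hc K' (vc K' (GC0 A) (G2 \<epsilon>)) (id2 K' (\<phi>0 A))) (coaction A \<eta> L) = id2 K' (\<phi>0 A)"
proof -
  note [simp] = A F.K.hom2_from_idn[OF A \<eta>] F.K'.hom2_from_idn[OF F.Fo_Ob[OF A] L]
  have [simp]: "\<epsilon> \<in> Ce K" "dom2 K \<epsilon> = b" "cod2 K \<epsilon> = idn K A"
    using \<epsilon> by (simp_all add: hom2_def)
  let ?x = "\<phi>0 A" and ?P = "\<phi>1 (idn K A)"
  have G_\<epsilon>_\<eta>: "vc K' (hc K' (G2 \<epsilon>) (id2 K' ?x)) (hc K' (G2 \<eta>) (id2 K' ?x))
      = id2 K' (cmp K' (G1 (idn K A)) ?x)"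
    using F.K'.interchange[of "id2 K' ?x" "id2 K' ?x" "G2 \<eta>" "G2 \<epsilon>"] \<epsilon>_\<eta> by (simp flip: G.F2_vc)
  have "vc K' (hc K' (vc K' (GC0 A) (G2 \<epsilon>)) (id2 K' ?x)) (coaction A \<eta> L)
      = vc K' (hc K' (GC0 A) (id2 K' ?x))
          (vc K' (vc K' (hc K' (G2 \<epsilon>) (id2 K' ?x)) (hc K' (G2 \<eta>) (id2 K' ?x)))
              (vc K' ?P (hc K' (id2 K' ?x) L)))"
    by (simp add: coaction_def)
  also have "\<dots> = vc K' (vc K' (hc K' (GC0 A) (id2 K' ?x)) ?P) (hc K' (id2 K' ?x) L)"
    by (simp add: G_\<epsilon>_\<eta>)
  also have "\<dots> = hc K' (id2 K' ?x) (vc K' (FC0 A) L)"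
    by (simp add: \<phi>1_idn)
  also have "\<dots> = id2 K' ?x"
    by (simp add: C0_L)
  finally show ?thesis .
qed

lemma comultiplication_coaction:
  assumes A: "A \<in> Ob K" and \<eta>: "\<eta> \<in> hom2 K (idn K A) b" and \<Delta>: "\<Delta> \<in> hom2 K b (cmp K b b)"
    and \<Delta>_\<eta>: "vc K \<Delta> \<eta> = hc K \<eta> \<eta>"
    and L: "L \<in> hom2 K' (idn K' (Fo A)) (F1 (idn K A))"
    and L_L: "hc K' L L = vc K' (FC2 (idn K A) (idn K A)) L"
  shows "vc K' (hc K' (vc K' (GC2 b b) (G2 \<Delta>)) (id2 K' (\<phi>0 A))) (coaction A \<eta> L)
    = vc K' (hc K' (G2 \<eta>) (hc K' (G2 \<eta>) (id2 K' (\<phi>0 A))))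
        (vc K' (hc K' (id2 K' (G1 (idn K A))) (\<phi>1 (idn K A)))
          (vc K' (hc K' (\<phi>1 (idn K A)) (id2 K' (F1 (idn K A))))
              (hc K' (id2 K' (\<phi>0 A)) (hc K' L L))))"
proof -
  note [simp] = A F.K.hom2_from_idn[OF A \<eta>] F.K'.hom2_from_idn[OF F.Fo_Ob[OF A] L]
  have [simp]: "\<Delta> \<in> Ce K" "dom2 K \<Delta> = b" "cod2 K \<Delta> = cmp K b b"
    using \<Delta> by (simp_all add: hom2_def)
  let ?x = "\<phi>0 A" and ?P = "\<phi>1 (idn K A)" and ?i = "idn K A"
  have G_\<Delta>_\<eta>: "vc K' (hc K' (G2 \<Delta>) (id2 K' ?x)) (hc K' (G2 \<eta>) (id2 K' ?x))
      = hc K' (G2 (hc K \<eta> \<eta>)) (id2 K' ?x)"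
    using F.K'.interchange[of "id2 K' ?x" "id2 K' ?x" "G2 \<eta>" "G2 \<Delta>"] \<Delta>_\<eta> by (simp flip: G.F2_vc)
  have G_C2_natural: "vc K' (GC2 b b) (G2 (hc K \<eta> \<eta>)) = vc K' (hc K' (G2 \<eta>) (G2 \<eta>)) (GC2 ?i ?i)"
    using G.C2_natural[of \<eta> \<eta>] by simp
  have "vc K' (hc K' (GC2 b b) (id2 K' ?x)) (hc K' (G2 (hc K \<eta> \<eta>)) (id2 K' ?x))
      = hc K' (vc K' (GC2 b b) (G2 (hc K \<eta> \<eta>))) (id2 K' ?x)"
    by simp
  also have "\<dots> = vc K' (hc K' (G2 \<eta>) (hc K' (G2 \<eta>) (id2 K' ?x))) (hc K' (GC2 ?i ?i) (id2 K' ?x))"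
    by (simp add: G_C2_natural)
  finally have G_C2_\<eta>_\<eta>: "vc K' (hc K' (GC2 b b) (id2 K' ?x)) (hc K' (G2 (hc K \<eta> \<eta>)) (id2 K' ?x))
      = vc K' (hc K' (G2 \<eta>) (hc K' (G2 \<eta>) (id2 K' ?x))) (hc K' (GC2 ?i ?i) (id2 K' ?x))" .
  have \<phi>1_idn_idn: "vc K' (hc K' (GC2 ?i ?i) (id2 K' ?x)) ?P
      = vc K' (hc K' (id2 K' (G1 ?i)) ?P)
          (vc K' (hc K' ?P (id2 K' (F1 ?i))) (hc K' (id2 K' ?x) (FC2 ?i ?i)))"
    using \<phi>1_cmp[OF F.K.idn_hom1 F.K.idn_hom1, of A] by simp
  have "vc K' (hc K' (vc K' (GC2 b b) (G2 \<Delta>)) (id2 K' ?x)) (coaction A \<eta> L)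
      = vc K' (hc K' (GC2 b b) (id2 K' ?x))
          (vc K' (hc K' (G2 \<Delta>) (id2 K' ?x))
              (vc K' (hc K' (G2 \<eta>) (id2 K' ?x)) (vc K' ?P (hc K' (id2 K' ?x) L))))"
    by (simp add: coaction_def)
  also have "\<dots> = vc K' (hc K' (GC2 b b) (id2 K' ?x))
      (vc K' (hc K' (G2 (hc K \<eta> \<eta>)) (id2 K' ?x)) (vc K' ?P (hc K' (id2 K' ?x) L)))"
    by (subst F.K'.vc_reduce[OF G_\<Delta>_\<eta>]) simp_all
  also have "\<dots> = vc K' (hc K' (G2 \<eta>) (hc K' (G2 \<eta>) (id2 K' ?x)))
      (vc K' (hc K' (GC2 ?i ?i) (id2 K' ?x)) (vc K' ?P (hc K' (id2 K' ?x) L)))"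
    by (subst F.K'.vc_reduce[OF G_C2_\<eta>_\<eta>]) simp_all
  also have "\<dots> = vc K' (hc K' (G2 \<eta>) (hc K' (G2 \<eta>) (id2 K' ?x)))
      (vc K' (hc K' (id2 K' (G1 ?i)) ?P)
        (vc K' (hc K' ?P (id2 K' (F1 ?i)))
            (vc K' (hc K' (id2 K' ?x) (FC2 ?i ?i)) (hc K' (id2 K' ?x) L))))"
    by (subst F.K'.vc_reduce[OF \<phi>1_idn_idn]) simp_all
  also have "\<dots> = vc K' (hc K' (G2 \<eta>) (hc K' (G2 \<eta>) (id2 K' ?x)))
      (vc K' (hc K' (id2 K' (G1 ?i)) ?P)
          (vc K' (hc K' ?P (id2 K' (F1 ?i))) (hc K' (id2 K' ?x) (hc K' L L))))"
    by (simp add: L_L)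
  finally show ?thesis .
qed

lemma hc_coaction:
  assumes A: "A \<in> Ob K" and \<eta>: "\<eta> \<in> hom2 K (idn K A) b"
    and L: "L \<in> hom2 K' (idn K' (Fo A)) (F1 (idn K A))"
  shows "vc K' (hc K' (G2 \<eta>) (id2 K' (cmp K' (\<phi>0 A) (F1 (idn K A)))))
      (vc K' (hc K' (\<phi>1 (idn K A)) (id2 K' (F1 (idn K A)))) (hc K' (id2 K' (\<phi>0 A)) (hc K' L L)))
    = vc K' (hc K' (id2 K' (cmp K' (G1 b) (\<phi>0 A))) L) (coaction A \<eta> L)"
proof -
  note [simp] = A F.K.hom2_from_idn[OF A \<eta>] F.K'.hom2_from_idn[OF F.Fo_Ob[OF A] L]
  let ?x = "\<phi>0 A" and ?Fi = "F1 (idn K A)"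
  have "hc K' (id2 K' ?x) (hc K' L L) = vc K' (hc K' (id2 K' ?x) (hc K' L (id2 K' ?Fi)))
      (hc K' (id2 K' ?x) L)"
    using F.K'.hc_eq_vc_whisker_left_first[of L L] by simp
  then have "vc K' (hc K' (G2 \<eta>) (id2 K' (cmp K' ?x ?Fi)))
        (vc K' (hc K' (\<phi>1 (idn K A)) (id2 K' ?Fi)) (hc K' (id2 K' ?x) (hc K' L L)))
      = vc K' (hc K' (coaction A \<eta> L) (id2 K' ?Fi)) (hc K' (id2 K' ?x) L)"
    by (simp add: coaction_def)
  also have "\<dots> = hc K' (coaction A \<eta> L) L"
    using F.K'.hc_eq_vc_whisker_left_first[of L "coaction A \<eta> L"] by (simp add: coaction_def)
  also have "\<dots> = vc K' (hc K' (id2 K' (cmp K' (G1 b) ?x)) L) (coaction A \<eta> L)"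
    using F.K'.hc_eq_vc_whisker_right_first[of L "coaction A \<eta> L"] by (simp add: coaction_def)
  finally show ?thesis .
qed

lemma coaction_coaction:
  assumes A: "A \<in> Ob K" and \<eta>: "\<eta> \<in> hom2 K (idn K A) b"
    and L: "L \<in> hom2 K' (idn K' (Fo A)) (F1 (idn K A))"
  shows "vc K' (hc K' (id2 K' (G1 b)) (coaction A \<eta> L)) (coaction A \<eta> L)
    = vc K' (hc K' (G2 \<eta>) (hc K' (G2 \<eta>) (id2 K' (\<phi>0 A))))
        (vc K' (hc K' (id2 K' (G1 (idn K A))) (\<phi>1 (idn K A)))
          (vc K' (hc K' (\<phi>1 (idn K A)) (id2 K' (F1 (idn K A))))
              (hc K' (id2 K' (\<phi>0 A)) (hc K' L L))))"
proof -
  note [simp] = A F.K.hom2_from_idn[OF A \<eta>] F.K'.hom2_from_idn[OF F.Fo_Ob[OF A] L]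
  let ?x = "\<phi>0 A" and ?P = "\<phi>1 (idn K A)" and ?Gi = "G1 (idn K A)" and ?Fi = "F1 (idn K A)"
  have G\<eta>_G\<eta>: "hc K' (G2 \<eta>) (hc K' (G2 \<eta>) (id2 K' ?x))
      = vc K' (hc K' (id2 K' (G1 b)) (hc K' (G2 \<eta>) (id2 K' ?x)))
          (hc K' (G2 \<eta>) (id2 K' (cmp K' ?Gi ?x)))"
    using F.K'.hc_eq_vc_whisker_right_first[of "hc K' (G2 \<eta>) (id2 K' ?x)" "G2 \<eta>"] by simp
  have G\<eta>_P: "vc K' (hc K' (G2 \<eta>) (id2 K' (cmp K' ?Gi ?x))) (hc K' (id2 K' ?Gi) ?P)
      = vc K' (hc K' (id2 K' (G1 b)) ?P) (hc K' (G2 \<eta>) (id2 K' (cmp K' ?x ?Fi)))"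
    using F.K'.hc_eq_vc_whisker_left_first[of ?P "G2 \<eta>"]
      F.K'.hc_eq_vc_whisker_right_first[of ?P "G2 \<eta>"] by simp
  have "vc K' (hc K' (id2 K' (G1 b)) (coaction A \<eta> L)) (coaction A \<eta> L)
      = vc K' (hc K' (id2 K' (G1 b)) (hc K' (G2 \<eta>) (id2 K' ?x)))
          (vc K' (hc K' (id2 K' (G1 b)) ?P)
              (vc K' (hc K' (id2 K' (cmp K' (G1 b) ?x)) L) (coaction A \<eta> L)))"
    by (simp add: coaction_def)
  also have "\<dots> = vc K' (hc K' (id2 K' (G1 b)) (hc K' (G2 \<eta>) (id2 K' ?x)))
      (vc K' (hc K' (id2 K' (G1 b)) ?P)
        (vc K' (hc K' (G2 \<eta>) (id2 K' (cmp K' ?x ?Fi)))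
          (vc K' (hc K' ?P (id2 K' ?Fi)) (hc K' (id2 K' ?x) (hc K' L L)))))"
    by (simp only: hc_coaction[OF A \<eta> L])
  also have "\<dots> = vc K' (hc K' (id2 K' (G1 b)) (hc K' (G2 \<eta>) (id2 K' ?x)))
      (vc K' (hc K' (G2 \<eta>) (id2 K' (cmp K' ?Gi ?x)))
        (vc K' (hc K' (id2 K' ?Gi) ?P)
            (vc K' (hc K' ?P (id2 K' ?Fi)) (hc K' (id2 K' ?x) (hc K' L L)))))"
    by (subst F.K'.vc_reduce[OF G\<eta>_P[symmetric]]) simp_all
  also have "\<dots> = vc K' (hc K' (G2 \<eta>) (hc K' (G2 \<eta>) (id2 K' ?x)))
      (vc K' (hc K' (id2 K' ?Gi) ?P)
          (vc K' (hc K' ?P (id2 K' ?Fi)) (hc K' (id2 K' ?x) (hc K' L L))))"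
    by (subst F.K'.vc_reduce[OF G\<eta>_G\<eta>[symmetric]]) simp_all
  finally show ?thesis .
qed

lemma left_comodule_coaction:
  assumes comonad: "comonad2 K A b \<Delta> \<epsilon>" and \<eta>: "\<eta> \<in> hom2 K (idn K A) b"
    and \<Delta>_\<eta>: "vc K \<Delta> \<eta> = hc K \<eta> \<eta>" and \<epsilon>_\<eta>: "vc K \<epsilon> \<eta> = id2 K (idn K A)"
    and L: "L \<in> hom2 K' (idn K' (Fo A)) (F1 (idn K A))"
    and L_L: "hc K' L L = vc K' (FC2 (idn K A) (idn K A)) L"
    and C0_L: "vc K' (FC0 A) L = id2 K' (idn K' (Fo A))"
  shows "left_comodule K' (Go A) (G1 b) (vc K' (GC2 b b) (G2 \<Delta>)) (vc K' (GC0 A) (G2 \<epsilon>)) (\<phi>0 A)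
    (coaction A \<eta> L)"
proof -
  note typing = comonad2_typing[OF comonad]
  have A: "A \<in> Ob K" by (fact typing(1))
  have \<Delta>: "\<Delta> \<in> hom2 K b (cmp K b b)" and \<epsilon>: "\<epsilon> \<in> hom2 K b (idn K A)"
    using typing by (simp_all add: hom2_def)
  note [simp] = A F.K.hom2_from_idn[OF A \<eta>] F.K'.hom2_from_idn[OF F.Fo_Ob[OF A] L]
  show ?thesis
    unfolding left_comodule_def
    using comultiplication_coaction[OF A \<eta> \<Delta> \<Delta>_\<eta> L L_L] coaction_coaction[OF A \<eta> L]
      coaction_counit[OF A \<eta> \<epsilon> \<epsilon>_\<eta> L C0_L]
    by (simp add: coaction_def hom2_def)
qed

end

lemma colax_transformationI:
  "strict_2cat K \<Longrightarrow> strict_2cat K' \<Longrightarrow> colax_nat K K' Fo F1 F2 FC2 FC0 Go G1 G2 GC2 GC0 \<phi>0 \<phi>1 \<Longrightarrow>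
   colax_transformation K K' Fo F1 F2 FC2 FC0 Go G1 G2 GC2 GC0 \<phi>0 \<phi>1"
  unfolding colax_transformation_def colax_transformation_axioms_def
  by (auto simp: colax_nat_def intro: colax_2functorI)

theorem colax_nat_unit_comodule:
  assumes "strict_2cat K" and "strict_2cat K'"
    and "colax_nat K K' Fo F1 F2 FC2 FC0 Go G1 G2 GC2 GC0 \<phi>0 \<phi>1"
    and comonad: "comonad2 K A b \<Delta> \<epsilon>" and "\<eta> \<in> hom2 K (idn K A) b"
    and "vc K \<Delta> \<eta> = hc K \<eta> \<eta>" and "vc K \<epsilon> \<eta> = id2 K (idn K A)"
    and "L \<in> hom2 K' (idn K' (Fo A)) (F1 (idn K A))"
    and "hc K' L L = vc K' (FC2 (idn K A) (idn K A)) L"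
    and "vc K' (FC0 A) L = id2 K' (idn K' (Fo A))"
  shows "comonad2 K' (Go A) (G1 b) (vc K' (GC2 b b) (G2 \<Delta>)) (vc K' (GC0 A) (G2 \<epsilon>)) \<and>
    left_comodule K' (Go A) (G1 b) (vc K' (GC2 b b) (G2 \<Delta>)) (vc K' (GC0 A) (G2 \<epsilon>)) (\<phi>0 A)
      (vc K' (hc K' (G2 \<eta>) (id2 K' (\<phi>0 A))) (vc K' (\<phi>1 (idn K A)) (hc K' (id2 K' (\<phi>0 A)) L)))"
proof -
  interpret colax_transformation K K' Fo F1 F2 FC2 FC0 Go G1 G2 GC2 GC0 \<phi>0 \<phi>1
    using assms(1-3) by (rule colax_transformationI)
  show ?thesis
    using G.comonad2_image[OF comonad] left_comodule_coaction[OF assms(4-)]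
    by (simp add: coaction_def)
qed

section \<open>Reversing 2-cells\<close>

definition co :: "('o,'a,'c) cat2 \<Rightarrow> ('o,'a,'c) cat2" where
  "co K = K\<lparr>dom2 := cod2 K, cod2 := dom2 K, vc := (\<lambda>\<beta> \<alpha>. vc K \<alpha> \<beta>)\<rparr>"

lemma co_simps [simp]:
  "Ob (co K) = Ob K" "Ar (co K) = Ar K" "Ce (co K) = Ce K" "src (co K) = src K" "trg (co K) = trg K"
  "idn (co K) = idn K" "cmp (co K) = cmp K" "dom2 (co K) = cod2 K" "cod2 (co K) = dom2 K"
  "vc (co K) \<beta> \<alpha> = vc K \<alpha> \<beta>" "hc (co K) = hc K" "id2 (co K) = id2 K"
  by (simp_all add: co_def)

lemma hom1_co [simp]: "hom1 (co K) = hom1 K"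
  by (simp add: hom1_def fun_eq_iff)

lemma hom2_co [simp]: "hom2 (co K) f g = hom2 K g f"
  by (auto simp: hom2_def)

lemma endo_co [simp]: "endo (co K) = endo K"
  by (simp add: endo_def fun_eq_iff)

lemma (in strict_2category) strict_2category_co: "strict_2category (co K)"
  by unfold_locales
    (auto intro: Ar_src_trg idn_hom1 cmp_hom1 cmp_assoc_hom1 id2_hom2 vc_hom2 hc_hom2 hc_assoc_hom2
      hc_id2_id2_hom1 simp: cmp_idn_hom1 vc_assoc_hom2 vc_id2_hom2 interchange_hom2 hc_id2_idn_hom2
      dest!: Ce_parallel)

lemma strict_2cat_co: "strict_2cat K \<Longrightarrow> strict_2cat (co K)"
  using strict_2category.strict_2category_co by (simp add: strict_2category_iff[symmetric])

lemma comonad2_co_iff: "comonad2 (co K) A b \<mu> \<eta> \<longleftrightarrow> monad2 K A b \<mu> \<eta>"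
  unfolding comonad2_def monad2_def by auto

lemma left_comodule_co_iff: "left_comodule (co K) A d \<mu> \<eta> x \<rho> \<longleftrightarrow> left_module K A d \<mu> \<eta> x \<rho>"
  unfolding left_comodule_def left_module_def by auto

lemma colax_functor_co_if_lax_functor:
  assumes "lax_functor K K' Fo F1 F2 L2 L0"
  shows "colax_functor (co K) (co K') Fo F1 F2 L2 L0"
proof -
  have "pre_functor (co K) (co K') Fo F1 F2"
    using assms unfolding lax_functor_def pre_functor_def by auto
  with assms show ?thesis
    unfolding colax_functor_def lax_functor_def by (elim conjE) (intro conjI; simp; blast)
qed

lemma colax_nat_co_if_lax_nat:
  assumes "strict_2cat K" and "strict_2cat K'"
    and lax_nat: "lax_nat K K' Fo F1 F2 FL2 FL0 Go G1 G2 GL2 GL0 \<psi>0 \<psi>1"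
  shows "colax_nat (co K) (co K') Fo F1 F2 FL2 FL0 Go G1 G2 GL2 GL0 \<psi>0 \<psi>1"
proof -
  have F: "lax_functor K K' Fo F1 F2 FL2 FL0" and G: "lax_functor K K' Go G1 G2 GL2 GL0"
    using lax_nat unfolding lax_nat_def by blast+
  interpret F: pre_2functor K K' Fo F1 F2
    using F by (intro pre_2functorI assms(1,2)) (simp add: lax_functor_def)
  interpret G: pre_2functor K K' Go G1 G2
    using G by (intro pre_2functorI assms(1,2)) (simp add: lax_functor_def)
  have reassoc:
    "vc K' (vc K' (hc K' (id2 K' (\<psi>0 C)) (FL2 g f)) (hc K' (\<psi>1 g) (id2 K' (F1 f))))
        (hc K' (id2 K' (G1 g)) (\<psi>1 f))
     = vc K' (hc K' (id2 K' (\<psi>0 C)) (FL2 g f))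
         (vc K' (hc K' (\<psi>1 g) (id2 K' (F1 f))) (hc K' (id2 K' (G1 g)) (\<psi>1 f)))"
    if f: "f \<in> hom1 K A B" and g: "g \<in> hom1 K B C" for A B C f g
  proof -
    have "\<psi>0 A \<in> hom1 K' (Fo A) (Go A)" "\<psi>0 B \<in> hom1 K' (Fo B) (Go B)"
      "\<psi>0 C \<in> hom1 K' (Fo C) (Go C)"
      using lax_nat f g unfolding lax_nat_def hom1_def by auto
    moreover have "\<psi>1 f \<in> hom2 K' (cmp K' (G1 f) (\<psi>0 A)) (cmp K' (\<psi>0 B) (F1 f))"
      and "\<psi>1 g \<in> hom2 K' (cmp K' (G1 g) (\<psi>0 B)) (cmp K' (\<psi>0 C) (F1 g))"
      using lax_nat f g unfolding lax_nat_def by blast+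
    moreover have "FL2 g f \<in> hom2 K' (cmp K' (F1 g) (F1 f)) (F1 (cmp K g f))"
      using F f g unfolding lax_functor_def by (elim conjE) blast
    ultimately show ?thesis
      using f g by (simp add: hom1_def hom2_def)
  qed
  show ?thesis
    using lax_nat colax_functor_co_if_lax_functor[OF F] colax_functor_co_if_lax_functor[OF G]
    unfolding colax_nat_def lax_nat_def by (auto simp: reassoc)
qed

section \<open>Modules induced by lax transformations\<close>

theorem lax_nat_counit_module:
  assumes strict: "strict_2cat K" and strict': "strict_2cat K'"
    and lax_nat: "lax_nat K K' Fo F1 F2 FL2 FL0 Go G1 G2 GL2 GL0 \<psi>0 \<psi>1"
    and monad: "monad2 K A b \<mu> \<eta>" and \<epsilon>: "\<epsilon> \<in> hom2 K b (idn K A)"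
    and \<epsilon>_\<mu>: "vc K \<epsilon> \<mu> = hc K \<epsilon> \<epsilon>" and \<epsilon>_\<eta>: "vc K \<epsilon> \<eta> = id2 K (idn K A)"
    and C: "C \<in> hom2 K' (F1 (idn K A)) (idn K' (Fo A))"
    and C_C: "hc K' C C = vc K' C (FL2 (idn K A) (idn K A))"
    and C_L: "vc K' C (FL0 A) = id2 K' (idn K' (Fo A))"
  shows "monad2 K' (Go A) (G1 b) (vc K' (G2 \<mu>) (GL2 b b)) (vc K' (G2 \<eta>) (GL0 A)) \<and>
    left_module K' (Go A) (G1 b) (vc K' (G2 \<mu>) (GL2 b b)) (vc K' (G2 \<eta>) (GL0 A)) (\<psi>0 A)
      (vc K' (hc K' (id2 K' (\<psi>0 A)) C) (vc K' (\<psi>1 (idn K A)) (hc K' (G2 \<epsilon>) (id2 K' (\<psi>0 A)))))"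
proof -
  txt \<open>Part (i) in the reversed 2-categories, with \<open>\<mu>\<close>, \<open>\<epsilon>\<close>, \<open>\<eta>\<close> and \<open>C\<close>
    in the roles of \<open>\<Delta>\<close>, \<open>\<eta>\<close>, \<open>\<epsilon>\<close> and \<open>L\<close>.\<close>
  have "comonad2 (co K') (Go A) (G1 b) (vc (co K') (GL2 b b) (G2 \<mu>)) (vc (co K') (GL0 A) (G2 \<eta>)) \<and>
    left_comodule (co K') (Go A) (G1 b) (vc (co K') (GL2 b b) (G2 \<mu>)) (vc (co K') (GL0 A) (G2 \<eta>))
        (\<psi>0 A)
      (vc (co K') (hc (co K') (G2 \<epsilon>) (id2 (co K') (\<psi>0 A)))
        (vc (co K') (\<psi>1 (idn (co K) A)) (hc (co K') (id2 (co K') (\<psi>0 A)) C)))"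
    by (rule colax_nat_unit_comodule[OF strict_2cat_co[OF strict] strict_2cat_co[OF strict']
          colax_nat_co_if_lax_nat[OF strict strict' lax_nat]])
      (use monad \<epsilon> \<epsilon>_\<mu> \<epsilon>_\<eta> C C_C C_L in \<open>simp_all add: comonad2_co_iff\<close>)
  moreover have "vc K' (vc K' (hc K' (id2 K' (\<psi>0 A)) C) (\<psi>1 (idn K A)))
      (hc K' (G2 \<epsilon>) (id2 K' (\<psi>0 A)))
      = vc K' (hc K' (id2 K' (\<psi>0 A)) C) (vc K' (\<psi>1 (idn K A)) (hc K' (G2 \<epsilon>) (id2 K' (\<psi>0 A))))"
  proof -
    interpret F: pre_2functor K K' Fo F1 F2
      using lax_nat by (intro pre_2functorI strict strict') (simp add: lax_nat_def lax_functor_def)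
    interpret G: pre_2functor K K' Go G1 G2
      using lax_nat by (intro pre_2functorI strict strict') (simp add: lax_nat_def lax_functor_def)
    have A: "A \<in> Ob K"
      using monad unfolding monad2_def by blast
    have "\<psi>0 A \<in> hom1 K' (Fo A) (Go A)"
      and "\<psi>1 (idn K A) \<in> hom2 K' (cmp K' (G1 (idn K A)) (\<psi>0 A)) (cmp K' (\<psi>0 A) (F1 (idn K A)))"
      using lax_nat A F.K.idn_hom1[OF A] unfolding lax_nat_def by simp_all
    moreover have "b \<in> hom1 K A A"
      using monad unfolding monad2_def endo_def by blast
    ultimately show ?thesis
      using A \<epsilon> C by (simp add: hom1_def hom2_def)
  qed
  ultimately show ?thesis
    by (simp add: comonad2_co_iff left_comodule_co_iff)
qed

theorem proposition4p13:
  fixes K :: "('o,'a,'c) cat2" and K' :: "('p,'b,'d) cat2"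
  assumes "strict_2cat K" and "strict_2cat K'" and "yb_operator K c"
    and "bilax_functor K c K' Fo F1 F2 FL2 FL0 FC2 FC0 \<nu>F"
    and "bilax_functor K c K' Go G1 G2 GL2 GL0 GC2 GC0 \<nu>G"
    and "c_bimonad K c A b \<mu> \<eta> \<Delta> \<epsilon>"
  shows
    "(colax_nat K K' Fo F1 F2 FC2 FC0 Go G1 G2 GC2 GC0 \<phi>0 \<phi>1 \<longrightarrow>
       comonad2 K' (Go A) (G1 b) (vc K' (GC2 b b) (G2 \<Delta>)) (vc K' (GC0 A) (G2 \<epsilon>)) \<and>
       left_comodule K' (Go A) (G1 b) (vc K' (GC2 b b) (G2 \<Delta>)) (vc K' (GC0 A) (G2 \<epsilon>)) (\<phi>0 A)
         (vc K' (hc K' (G2 \<eta>) (id2 K' (\<phi>0 A)))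
            (vc K' (\<phi>1 (idn K A)) (hc K' (id2 K' (\<phi>0 A)) (FL0 A))))) \<and>
     (lax_nat K K' Fo F1 F2 FL2 FL0 Go G1 G2 GL2 GL0 \<psi>0 \<psi>1 \<longrightarrow>
       monad2 K' (Go A) (G1 b) (vc K' (G2 \<mu>) (GL2 b b)) (vc K' (G2 \<eta>) (GL0 A)) \<and>
       left_module K' (Go A) (G1 b) (vc K' (G2 \<mu>) (GL2 b b)) (vc K' (G2 \<eta>) (GL0 A)) (\<psi>0 A)
         (vc K' (hc K' (id2 K' (\<psi>0 A)) (FC0 A))
            (vc K' (\<psi>1 (idn K A)) (hc K' (G2 \<epsilon>) (id2 K' (\<psi>0 A))))))"
proof -
  have monad: "monad2 K A b \<mu> \<eta>" and comonad: "comonad2 K A b \<Delta> \<epsilon>"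
    and \<epsilon>_\<epsilon>: "hc K \<epsilon> \<epsilon> = vc K \<epsilon> \<mu>" and \<eta>_\<eta>: "hc K \<eta> \<eta> = vc K \<Delta> \<eta>"
    and \<epsilon>_\<eta>: "vc K \<epsilon> \<eta> = id2 K (idn K A)"
    using assms(6) unfolding c_bimonad_def Let_def by blast+
  have A: "A \<in> Ob K" and \<eta>: "\<eta> \<in> hom2 K (idn K A) b" and \<epsilon>: "\<epsilon> \<in> hom2 K b (idn K A)"
    using monad comonad unfolding monad2_def comonad2_def by blast+
  have FL0: "FL0 A \<in> hom2 K' (idn K' (Fo A)) (F1 (idn K A))"
    and FC0: "FC0 A \<in> hom2 K' (F1 (idn K A)) (idn K' (Fo A))"
    using assms(4) A unfolding bilax_functor_def lax_functor_def colax_functor_def by simp_all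
  have bilax: "hc K' (FL0 A) (FL0 A) = vc K' (FC2 (idn K A) (idn K A)) (FL0 A)"
      "hc K' (FC0 A) (FC0 A) = vc K' (FC0 A) (FL2 (idn K A) (idn K A))"
      "vc K' (FC0 A) (FL0 A) = id2 K' (idn K' (Fo A))"
    using assms(4) A unfolding bilax_functor_def by simp_all
  note comodule = colax_nat_unit_comodule[of K K' Fo F1 F2 FC2 FC0 Go G1 G2 GC2 GC0 \<phi>0 \<phi>1,
      OF assms(1,2) _ comonad \<eta> \<eta>_\<eta>[symmetric] \<epsilon>_\<eta> FL0 bilax(1,3)]
  note module = lax_nat_counit_module[of K K' Fo F1 F2 FL2 FL0 Go G1 G2 GL2 GL0 \<psi>0 \<psi>1,
      OF assms(1,2) _ monad \<epsilon> \<epsilon>_\<epsilon>[symmetric] \<epsilon>_\<eta> FC0 bilax(2,3)]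
  show ?thesis
    using comodule module by blast
qed

end
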